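(* Let $(X_1,d_1)$, $(X_2,d_2)$ be proper CAT(0) spaces, let $\Gamma$ be an infinite group acting convex co-compactly by isometries on $X_1$ and on $X_2$ via homomorphisms $\rho_i:\Gamma\to\mathrm{Isom}(X_i)$, and suppose the diagonal action $\rho=(\rho_1,\rho_2)$ of $\Gamma$ on $X_1\times X_2$ is convex co-compact. Let $\alpha\in\Gamma$ be such that $\rho_i(\alpha)$ is a rank one isometry of $X_i$ for $i=1,2$. Let $\beta\in\Gamma$ be an infinite order element such that, for $i=1,2$, $\rho_i(\beta)$ fixes the attractive and the repulsive fixed points of $\rho_i(\alpha)$ in the visual boundary $\partial X_i$. Then $\mathrm{slp}(\rho(\beta))=\mathrm{slp}(\rho(\alpha))$.
   Context: $X_1\times X_2$ carries the product metric $\sqrt{d_1^2+d_2^2}$. Convex co-compact: properly discontinuous isometric action with a nonempty closed invariant convex subset having compact quotient. A hyperbolic isometry $g$ (displacement $d(x,gx)$ attains its infimum $\ell(g)>0$) has an axis, a $g$-invariant geodesic line where the displacement is minimal; $g$ is rank one if an axis $l_g$ has the contraction property (some $K>0$ bounds the diameter of the nearest-point projection to $l_g$ of any ball disjoint from $l_g$). A rank one isometry $g$ has two fixed points $g_\pm\in\partial X$ (the endpoints of its axis) with $g^n\to g_+$ uniformly on compact subsets of $\partial X\setminus\{g_-\}$ as $n\to\infty$; $g_+$ is attractive and $g_-$ repulsive. Slope: for a geodesic ray $r$ in $X_1\times X_2$ with projections $r_i$, $\mathrm{slp}(r)=\infty$ if $r_2$ is constant, otherwise $d_1(r_1(0),r_1(1))/d_2(r_2(0),r_2(1))$;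 for a line $l$, $\mathrm{slp}(l)=\mathrm{slp}(l|_{[0,\infty)})$; for a hyperbolic isometry $g$ of $X_1\times X_2$, $\mathrm{slp}(g)$ is the slope of any of its axes. *)

theory Defs
  imports "HOL-Analysis.Analysis" "HOL-Algebra.Group"
begin

text \<open>Spaces are metric-space types; the product type carries the product metric
  sqrt(d1^2 + d2^2) (library instance, dist_prod_def).\<close>

definition isometry :: "('a::metric_space \<Rightarrow> 'a) \<Rightarrow> bool" where
  "isometry f \<longleftrightarrow> bij f \<and> (\<forall>x y. dist (f x) (f y) = dist x y)"

definition proper_space :: "'a::metric_space itself \<Rightarrow> bool" where
  "proper_space (T::'a itself) \<longleftrightarrow> (\<forall>(x::'a) r. compact (cball x r))"

definition geodesic_seg :: "(real \<Rightarrow> 'a::metric_space) \<Rightarrow> 'a \<Rightarrow> 'a \<Rightarrow> bool" where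
  "geodesic_seg c x y \<longleftrightarrow> c 0 = x \<and> c (dist x y) = y \<and>
     (\<forall>s\<in>{0..dist x y}. \<forall>t\<in>{0..dist x y}. dist (c s) (c t) = \<bar>s - t\<bar>)"

definition geodesic_space :: "'a::metric_space itself \<Rightarrow> bool" where
  "geodesic_space (T::'a itself) \<longleftrightarrow> (\<forall>x y::'a. \<exists>c. geodesic_seg c x y)"

text \<open>CAT(0): geodesic, and every geodesic triangle satisfies the CAT(0) inequality
  with respect to a Euclidean comparison triangle x', y', z' in the plane (= complex).
  Each side is a geodesic c from u to v of length l, whose comparison map is
  s |-> u' + (s/l)(v' - u').\<close>
definition CAT0 :: "'a::metric_space itself \<Rightarrow> bool" where
  "CAT0 (T::'a itself) \<longleftrightarrow> geodesic_space T \<and>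
    (\<forall>(x::'a) y z c1 c2 c3. geodesic_seg c1 x y \<and> geodesic_seg c2 y z \<and> geodesic_seg c3 z x \<longrightarrow>
      (\<forall>x' y' z' :: complex.
         dist x' y' = dist x y \<and> dist y' z' = dist y z \<and> dist z' x' = dist z x \<longrightarrow>
         (let sides = [(c1, x', y', dist x y), (c2, y', z', dist y z), (c3, z', x', dist z x)] in
          \<forall>(c, u, v, l)\<in>set sides. \<forall>(c', u', v', l')\<in>set sides.
            \<forall>s\<in>{0..l}. \<forall>t\<in>{0..l'}.
              dist (c s) (c' t) \<le> dist (u + of_real (s / l) * (v - u)) (u' + of_real (t / l') * (v' - u')))))"

definition geodesic_ray :: "(real \<Rightarrow> 'a::metric_space) \<Rightarrow> bool" where
  "geodesic_ray r \<longleftrightarrow> (\<forall>s\<ge>0. \<forall>t\<ge>0. dist (r s) (r t) = \<bar>s - t\<bar>)"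

definition geodesic_line :: "(real \<Rightarrow> 'a::metric_space) \<Rightarrow> bool" where
  "geodesic_line l \<longleftrightarrow> (\<forall>s t. dist (l s) (l t) = \<bar>s - t\<bar>)"

definition asymptotic :: "(real \<Rightarrow> 'a::metric_space) \<Rightarrow> (real \<Rightarrow> 'a) \<Rightarrow> bool" where
  "asymptotic r r' \<longleftrightarrow> (\<exists>C. \<forall>t\<ge>0. dist (r t) (r' t) \<le> C)"

text \<open>Points of the visual boundary are asymptote classes of geodesic rays.\<close>
definition bd_point :: "(real \<Rightarrow> 'a::metric_space) \<Rightarrow> (real \<Rightarrow> 'a) set" where
  "bd_point r = {r'. geodesic_ray r' \<and> asymptotic r r'}"

definition visual_boundary :: "'a::metric_space itself \<Rightarrow> (real \<Rightarrow> 'a) set set" where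
  "visual_boundary (T::'a itself) = {bd_point r | r::real \<Rightarrow> 'a. geodesic_ray r}"

definition bd_act :: "('a::metric_space \<Rightarrow> 'a) \<Rightarrow> (real \<Rightarrow> 'a) set \<Rightarrow> (real \<Rightarrow> 'a) set" where
  "bd_act g \<xi> = (\<lambda>r. g \<circ> r) ` \<xi>"

definition fixes_bd :: "('a::metric_space \<Rightarrow> 'a) \<Rightarrow> (real \<Rightarrow> 'a) set \<Rightarrow> bool" where
  "fixes_bd g \<xi> \<longleftrightarrow> bd_act g \<xi> = \<xi>"

definition endpoint_plus :: "(real \<Rightarrow> 'a::metric_space) \<Rightarrow> (real \<Rightarrow> 'a) set" where
  "endpoint_plus l = bd_point l"

definition endpoint_minus :: "(real \<Rightarrow> 'a::metric_space) \<Rightarrow> (real \<Rightarrow> 'a) set" where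
  "endpoint_minus l = bd_point (\<lambda>t. l (- t))"

definition translation_length :: "('a::metric_space \<Rightarrow> 'a) \<Rightarrow> real" where
  "translation_length g = Inf (range (\<lambda>x. dist x (g x)))"

definition hyperbolic :: "('a::metric_space \<Rightarrow> 'a) \<Rightarrow> bool" where
  "hyperbolic g \<longleftrightarrow> (\<exists>x. dist x (g x) = translation_length g) \<and> translation_length g > 0"

definition is_axis :: "('a::metric_space \<Rightarrow> 'a) \<Rightarrow> (real \<Rightarrow> 'a) \<Rightarrow> bool" where
  "is_axis g l \<longleftrightarrow> geodesic_line l \<and> g ` range l = range l \<and>
     (\<forall>t. dist (l t) (g (l t)) = translation_length g)"

definition nearest_proj :: "'a::metric_space set \<Rightarrow> 'a \<Rightarrow> 'a" where
  "nearest_proj S x = (SOME p. p \<in> S \<and> (\<forall>q\<in>S. dist x p \<le> dist x q))"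

definition contracting :: "(real \<Rightarrow> 'a::metric_space) \<Rightarrow> bool" where
  "contracting l \<longleftrightarrow> (\<exists>K>0. \<forall>x r. ball x r \<inter> range l = {} \<longrightarrow>
       diameter (nearest_proj (range l) ` ball x r) \<le> K)"

definition rank_one :: "('a::metric_space \<Rightarrow> 'a) \<Rightarrow> bool" where
  "rank_one g \<longleftrightarrow> hyperbolic g \<and> (\<exists>l. is_axis g l \<and> contracting l)"

definition isom_action :: "('g, 'm) monoid_scheme \<Rightarrow> ('g \<Rightarrow> 'a::metric_space \<Rightarrow> 'a) \<Rightarrow> bool" where
  "isom_action G \<rho> \<longleftrightarrow> (\<forall>g\<in>carrier G. isometry (\<rho> g)) \<and>
     (\<forall>g\<in>carrier G. \<forall>h\<in>carrier G. \<rho> (g \<otimes>\<^bsub>G\<^esub> h) = \<rho> g \<circ> \<rho> h)"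

definition properly_discontinuous :: "('g, 'm) monoid_scheme \<Rightarrow> ('g \<Rightarrow> 'a::metric_space \<Rightarrow> 'a) \<Rightarrow> bool" where
  "properly_discontinuous G \<rho> \<longleftrightarrow>
     (\<forall>K. compact K \<longrightarrow> finite {g\<in>carrier G. \<rho> g ` K \<inter> K \<noteq> {}})"

definition convex_set :: "'a::metric_space set \<Rightarrow> bool" where
  "convex_set C \<longleftrightarrow> (\<forall>x\<in>C. \<forall>y\<in>C. \<forall>c. geodesic_seg c x y \<longrightarrow> c ` {0..dist x y} \<subseteq> C)"

text \<open>Convex co-compact: properly discontinuous isometric action with a nonempty closed
  invariant convex subset C whose quotient is compact, i.e. C is covered by the
  translates of a compact subset of C.\<close>
definition convex_cocompact :: "('g, 'm) monoid_scheme \<Rightarrow> ('g \<Rightarrow> 'a::metric_space \<Rightarrow> 'a) \<Rightarrow> bool" where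
  "convex_cocompact G \<rho> \<longleftrightarrow> isom_action G \<rho> \<and> properly_discontinuous G \<rho> \<and>
     (\<exists>C. C \<noteq> {} \<and> closed C \<and> convex_set C \<and> (\<forall>g\<in>carrier G. \<rho> g ` C \<subseteq> C) \<and>
        (\<exists>K. compact K \<and> K \<subseteq> C \<and> C = (\<Union>g\<in>carrier G. \<rho> g ` K)))"

definition diag_action ::
  "('g \<Rightarrow> 'a \<Rightarrow> 'a) \<Rightarrow> ('g \<Rightarrow> 'b \<Rightarrow> 'b) \<Rightarrow> 'g \<Rightarrow> 'a \<times> 'b \<Rightarrow> 'a \<times> 'b" where
  "diag_action \<rho>1 \<rho>2 g = (\<lambda>(x, y). (\<rho>1 g x, \<rho>2 g y))"

definition slope_ray :: "(real \<Rightarrow> 'a::metric_space \<times> 'b::metric_space) \<Rightarrow> ereal" where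
  "slope_ray r = (if (\<forall>t\<ge>0. snd (r t) = snd (r 0)) then \<infinity>
     else ereal (dist (fst (r 0)) (fst (r 1)) / dist (snd (r 0)) (snd (r 1))))"

text \<open>Slope of a line = slope of its restriction to [0,oo); slope_ray only looks at t >= 0.\<close>
definition slope_line :: "(real \<Rightarrow> 'a::metric_space \<times> 'b::metric_space) \<Rightarrow> ereal" where
  "slope_line l = slope_ray l"

definition slope_isom :: "('a::metric_space \<times> 'b::metric_space \<Rightarrow> 'a \<times> 'b) \<Rightarrow> ereal" where
  "slope_isom g = slope_line (SOME l. is_axis g l)"

end

theory Submission
  imports Defs
begin

(* Since beta fixes both endpoints of the contracting axis l of alpha in X_1, its powers move l
   by a bounded amount, so the points beta^n (l 0) stay uniformly close to l.  Correcting them by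
   powers of alpha brings them into a fixed compact ball, and proper discontinuity gives
   beta^p = alpha^z with p > 0 and z <> 0.  In each factor beta^p then translates the contracting
   axis of alpha by |z| tau_i(alpha); the CAT(0) inequality and the contraction property show that
   beta has an axis along which it translates by tau_i(beta) = |z| tau_i(alpha) / p.  Finally an
   axis of a product isometry whose factors translate by tau_1 and tau_2 has slope tau_1 / tau_2,
   so the common factor |z| / p cancels. *)

section \<open>Isometries and translation length\<close>

lemma isometry_dist: "isometry f \<Longrightarrow> dist (f x) (f y) = dist x y"
  unfolding isometry_def by auto

lemma translation_length_le: "translation_length g \<le> dist x (g x)"
  unfolding translation_length_def by (rule cInf_lower) (auto intro: bdd_belowI[of _ 0])

lemma translation_length_greatest: "(\<And>x. c \<le> dist x (g x)) \<Longrightarrow> c \<le> translation_length g"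
  unfolding translation_length_def by (rule cInf_greatest) auto

lemma translation_length_eqI:
  "(\<And>x. c \<le> dist x (g x)) \<Longrightarrow> dist x0 (g x0) = c \<Longrightarrow> translation_length g = c"
  using translation_length_le[of g x0] translation_length_greatest[of c g] by auto

lemma translation_length_nonneg: "0 \<le> translation_length g"
  by (rule translation_length_greatest) auto

lemma isom_action_mult:
  "isom_action G \<rho> \<Longrightarrow> a \<in> carrier G \<Longrightarrow> b \<in> carrier G \<Longrightarrow> \<rho> (a \<otimes>\<^bsub>G\<^esub> b) x = \<rho> a (\<rho> b x)"
  unfolding isom_action_def by auto

lemma isom_action_isometry: "isom_action G \<rho> \<Longrightarrow> a \<in> carrier G \<Longrightarrow> isometry (\<rho> a)"
  unfolding isom_action_def by auto

lemma isom_action_one: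
  assumes "group G" "isom_action G \<rho>"
  shows "\<rho> \<one>\<^bsub>G\<^esub> x = x"
proof -
  interpret group G by fact
  obtain y where y: "x = \<rho> \<one>\<^bsub>G\<^esub> y"
    using isom_action_isometry[OF assms(2)] unfolding isometry_def by (metis bij_pointE one_closed)
  have "\<rho> \<one>\<^bsub>G\<^esub> (\<rho> \<one>\<^bsub>G\<^esub> y) = \<rho> \<one>\<^bsub>G\<^esub> y"
    using isom_action_mult[OF assms(2), of "\<one>\<^bsub>G\<^esub>" "\<one>\<^bsub>G\<^esub>" y] by simp
  then show ?thesis using y by metis
qed

locale cyclic_isom_action =
  fixes G :: "('g, 'm) monoid_scheme" and \<rho> :: "'g \<Rightarrow> 'a::metric_space \<Rightarrow> 'a" and \<beta> :: 'g
  assumes group: "group G" and action: "isom_action G \<rho>" and closed: "\<beta> \<in> carrier G"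
begin

definition pw :: "int \<Rightarrow> 'a \<Rightarrow> 'a" where "pw z = \<rho> (\<beta> [^]\<^bsub>G\<^esub> z)"

lemma pw_add: "pw (z + w) x = pw z (pw w x)"
proof -
  interpret group G by (rule group)
  show ?thesis unfolding pw_def using closed action by (simp add: int_pow_mult isom_action_mult)
qed

lemma pw_isometry: "isometry (pw z)"
proof -
  interpret group G by (rule group)
  show ?thesis unfolding pw_def using closed action by (simp add: isom_action_isometry)
qed

lemma pw_dist: "dist (pw z x) (pw z y) = dist x y"
  using isometry_dist[OF pw_isometry] .

lemma pw_0: "pw 0 x = x"
  unfolding pw_def using isom_action_one[OF group action] by simp

lemma pw_1: "pw 1 = \<rho> \<beta>"
proof -
  interpret group G by (rule group)
  show ?thesis unfolding pw_def using closed by simp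
qed

lemma pw_commute: "pw z (pw w x) = pw w (pw z x)"
  using pw_add[of z w x] pw_add[of w z x] by (simp add: add.commute)

lemma dist_pw_pw: "dist (pw a x) (pw b x) = dist x (pw (b - a) x)"
  using pw_add[of a "b - a" x] pw_dist[of a x "pw (b - a) x"] by simp

lemma pw_continuous: "continuous_on S (pw z)"
  by (rule lipschitz_on_continuous_on[of 1]) (auto intro!: lipschitz_onI simp: pw_dist)

lemma pw_mult_dist_le: "dist y (pw (int n * p) y) \<le> real n * dist y (pw p y)"
proof (induction n)
  case 0
  then show ?case by (simp add: pw_0)
next
  case (Suc n)
  have "pw (int (Suc n) * p) y = pw (int n * p) (pw p y)"
    using pw_add[of "int n * p" p y] by (simp add: algebra_simps)
  then have "dist y (pw (int (Suc n) * p) y) \<le> dist y (pw (int n * p) y) + dist (pw (int n * p) y) (pw (int n * p) (pw p y))"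
    using dist_triangle[of y _ "pw (int n * p) y"] by simp
  then show ?case using Suc pw_dist[of "int n * p" y "pw p y"] by (simp add: algebra_simps)
qed

lemma pw_mult_shift:
  fixes l :: "real \<Rightarrow> 'a"
  assumes shift: "\<And>t. pw p (l t) = l (t + c)"
  shows "pw (z * p) (l t) = l (t + of_int z * c)"
proof -
  have nat: "pw (int n * q) (l t) = l (t + real n * d)" if "\<And>t. pw q (l t) = l (t + d)" for n q and d :: real and t
  proof (induction n arbitrary: t)
    case 0
    then show ?case by (simp add: pw_0)
  next
    case (Suc n)
    have "pw (int (Suc n) * q) (l t) = pw q (pw (int n * q) (l t))"
      using pw_add[of q "int n * q"] by (simp add: algebra_simps)
    then show ?case using Suc that by (simp add: algebra_simps)
  qed
  have neg: "pw (- p) (l t) = l (t - c)" for t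
    using pw_add[of "- p" p "l (t - c)"] shift[of "t - c"] by (simp add: pw_0)
  show ?thesis
  proof (cases "z \<ge> 0")
    case True
    then show ?thesis using nat[OF shift, of "nat z"] by simp
  next
    case False
    then show ?thesis using nat[of "- p" "- c" "nat (- z)"] neg by simp
  qed
qed

end

section \<open>Geodesic lines\<close>

lemma geodesic_line_dist: "geodesic_line l \<Longrightarrow> dist (l s) (l t) = \<bar>s - t\<bar>"
  unfolding geodesic_line_def by auto

lemma geodesic_line_reflect: "geodesic_line l \<Longrightarrow> geodesic_line (\<lambda>t. l (- t))"
  unfolding geodesic_line_def by (auto simp: abs_minus_commute)

lemma geodesic_line_isometry:
  "geodesic_line l \<Longrightarrow> (\<And>x y. dist (f x) (f y) = dist x y) \<Longrightarrow> geodesic_line (\<lambda>t. f (l t))"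
  unfolding geodesic_line_def by simp

lemma geodesic_line_continuous: "geodesic_line l \<Longrightarrow> continuous_on S l"
  by (rule lipschitz_on_continuous_on[of 1])
    (auto intro!: lipschitz_onI simp: geodesic_line_dist dist_real_def)

lemma range_reflect: "range (\<lambda>t::real. l (- t)) = range l"
  using image_image[of l uminus UNIV] by simp

lemma geodesic_line_nearest_point:
  assumes "geodesic_line l"
  shows "\<exists>s. \<forall>t. dist x (l s) \<le> dist x (l t)"
proof -
  define M where "M = 2 * dist x (l 0)"
  have "continuous_on {-M..M} (\<lambda>t. dist x (l t))"
    using geodesic_line_continuous[OF assms] by (intro continuous_intros) auto
  moreover have "{-M..M} \<noteq> {}" unfolding M_def by simp
  ultimately obtain s where s: "s \<in> {-M..M}" "\<And>t. t \<in> {-M..M} \<Longrightarrow> dist x (l s) \<le> dist x (l t)"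
    using continuous_attains_inf[OF compact_Icc] by metis
  have "dist x (l s) \<le> dist x (l t)" for t
  proof (cases "t \<in> {-M..M}")
    case False
    have "\<bar>t\<bar> \<le> dist x (l t) + dist x (l 0)"
      using geodesic_line_dist[OF assms, of t 0] dist_triangle[of "l t" "l 0" x] by (simp add: dist_commute)
    then have "dist x (l 0) \<le> dist x (l t)" using False unfolding M_def by auto
    then show ?thesis using s(2)[of 0] unfolding M_def by simp
  qed (use s in auto)
  then show ?thesis by blast
qed

text \<open>Pointwise the translation is by \<open>d\<close> or by \<open>-d\<close>; mixing the two contradicts the isometry
  property.\<close>

lemma isometry_line_translation:
  fixes l :: "real \<Rightarrow> 'a::metric_space"
  assumes l: "geodesic_line l" and iso: "\<And>x y. dist (g x) (g y) = dist x y"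
    and range: "\<And>t. g (l t) \<in> range l" and displ: "\<And>t. dist (l t) (g (l t)) = d" and "d > 0"
  shows "\<exists>\<sigma>. \<bar>\<sigma>\<bar> = d \<and> (\<forall>t. g (l t) = l (t + \<sigma>))"
proof -
  have either: "g (l t) = l (t + d) \<or> g (l t) = l (t - d)" for t
  proof -
    obtain s where s: "g (l t) = l s" using range[of t] by auto
    then have "\<bar>t - s\<bar> = d" using displ[of t] geodesic_line_dist[OF l, of t s] by simp
    then have "s = t + d \<or> s = t - d" by auto
    then show ?thesis using s by auto
  qed
  have mixed: "u = t + d" if "g (l t) = l (t + d)" "g (l u) = l (u - d)" for t u
  proof -
    have "\<bar>t - u\<bar> = \<bar>t + d - (u - d)\<bar>"
      using that iso[of "l t" "l u"] geodesic_line_dist[OF l] by metis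
    then show ?thesis using \<open>d > 0\<close> by (auto simp: abs_if split: if_splits)
  qed
  show ?thesis
  proof (cases "\<forall>t. g (l t) = l (t + d)")
    case True
    then show ?thesis using \<open>d > 0\<close> by (intro exI[of _ d]) auto
  next
    case False
    then obtain u where u: "g (l u) = l (u - d)" using either by blast
    have "g (l t) = l (t - d)" for t
    proof (rule ccontr)
      assume "g (l t) \<noteq> l (t - d)"
      then have forward: "g (l t) = l (t + d)" using either by auto
      then have "u = t + d" using mixed[OF _ u] by blast
      consider "g (l (t + d/2)) = l (t + d/2 + d)" | "g (l (t + d/2)) = l (t + d/2 - d)"
        using either by blast
      then show False
      proof cases
        case 1
        then show False using mixed[OF 1 u] \<open>u = t + d\<close> \<open>d > 0\<close> by simp
      next
        case 2
        then show False using mixed[OF forward 2] \<open>d > 0\<close> by simp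
      qed
    qed
    then show ?thesis using \<open>d > 0\<close> by (intro exI[of _ "- d"]) auto
  qed
qed

lemma geodesic_line_orient:
  assumes "geodesic_line l" and "\<And>t. g (l t) = l (t + c)"
  shows "\<exists>m. geodesic_line m \<and> range m = range l \<and> (\<forall>t. g (m t) = m (t + \<bar>c\<bar>))"
proof (cases "c \<ge> 0")
  case True
  then show ?thesis using assms by (intro exI[of _ l]) auto
next
  case False
  have "g (l (- t)) = l (- (t + \<bar>c\<bar>))" for t using assms(2)[of "- t"] False by simp
  then show ?thesis using geodesic_line_reflect[OF assms(1)] range_reflect[of l]
    by (intro exI[of _ "\<lambda>t. l (- t)"]) auto
qed

lemma is_axis_translation:
  assumes "isometry g" "is_axis g l" "translation_length g > 0"
  shows "\<exists>\<sigma>. \<bar>\<sigma>\<bar> = translation_length g \<and> (\<forall>t. g (l t) = l (t + \<sigma>))"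
proof -
  have "g (l t) \<in> range l" for t
    using assms(2) unfolding is_axis_def by blast
  then show ?thesis
    using assms isometry_line_translation[of l g "translation_length g"]
    unfolding is_axis_def by (simp add: isometry_dist)
qed

lemma is_axis_oriented:
  assumes "isometry g" "is_axis g l" "translation_length g > 0"
  shows "\<exists>L. geodesic_line L \<and> range L = range l \<and> (\<forall>t. g (L t) = L (t + translation_length g))"
  using is_axis_translation[OF assms] geodesic_line_orient[of l g] assms(2)
  unfolding is_axis_def by metis


lemma geodesic_seg_dist:
  "geodesic_seg c x y \<Longrightarrow> s \<in> {0..dist x y} \<Longrightarrow> t \<in> {0..dist x y} \<Longrightarrow> dist (c s) (c t) = \<bar>s - t\<bar>"
  unfolding geodesic_seg_def by auto

lemma geodesic_seg_ends: "geodesic_seg c x y \<Longrightarrow> c 0 = x \<and> c (dist x y) = y"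
  unfolding geodesic_seg_def by auto

lemma geodesic_space_seg: "geodesic_space TYPE('a::metric_space) \<Longrightarrow> \<exists>c. geodesic_seg c (x::'a) y"
  unfolding geodesic_space_def by auto

lemma dist_triangle4: "dist a d \<le> dist a b + dist b c + dist c d"
  using dist_triangle[of a d b] dist_triangle[of b d c] by linarith

section \<open>Contracting geodesic lines\<close>

locale contracting_line =
  fixes l :: "real \<Rightarrow> 'a::metric_space" and K :: real
  assumes line: "geodesic_line l" and K_pos: "K > 0"
    and contracting: "\<And>x r. ball x r \<inter> range l = {} \<Longrightarrow> diameter (nearest_proj (range l) ` ball x r) \<le> K"
begin

definition proj :: "'a \<Rightarrow> 'a" where "proj = nearest_proj (range l)"
definition line_dist :: "'a \<Rightarrow> real" where "line_dist x = dist x (proj x)"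

lemma proj_nearest: "proj x \<in> range l \<and> (\<forall>q\<in>range l. dist x (proj x) \<le> dist x q)"
proof -
  obtain s where "\<forall>t. dist x (l s) \<le> dist x (l t)" using geodesic_line_nearest_point[OF line] by blast
  then have "\<exists>p. p \<in> range l \<and> (\<forall>q\<in>range l. dist x p \<le> dist x q)" by blast
  then show ?thesis unfolding proj_def nearest_proj_def by (rule someI_ex)
qed

lemma proj_in_range: "proj x \<in> range l"
  using proj_nearest by auto

lemma line_dist_le: "q \<in> range l \<Longrightarrow> line_dist x \<le> dist x q"
  using proj_nearest unfolding line_dist_def by auto

lemma line_dist_le_line: "line_dist x \<le> dist x (l t)"
  using line_dist_le by auto

lemma line_dist_nonneg: "0 \<le> line_dist x"
  unfolding line_dist_def by simp

lemma line_dist_triangle: "line_dist x \<le> line_dist y + dist x y"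
  using line_dist_le[OF proj_in_range, of x y] dist_triangle[of x "proj y" y]
  unfolding line_dist_def by (simp add: dist_commute)

lemma line_dist_continuous: "continuous_on S line_dist"
proof (rule lipschitz_on_continuous_on[of 1], rule lipschitz_onI)
  show "dist (line_dist x) (line_dist y) \<le> 1 * dist x y" for x y
    using line_dist_triangle[of x y] line_dist_triangle[of y x] by (simp add: dist_real_def dist_commute)
qed simp

text \<open>The ball of radius \<open>line_dist y\<close> about \<open>y\<close> misses the line, so the contraction property
  applies to it.\<close>

lemma dist_proj_le_K:
  assumes "dist y z < line_dist y"
  shows "dist (proj y) (proj z) \<le> K"
proof -
  have disjoint: "ball y (line_dist y) \<inter> range l = {}"
    using line_dist_le[of _ y] by fastforce
  have "proj ` ball y (line_dist y) \<subseteq> cball y (3 * line_dist y)"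
  proof
    fix w assume "w \<in> proj ` ball y (line_dist y)"
    then obtain z' where z': "dist y z' < line_dist y" "w = proj z'" by auto
    have "line_dist z' \<le> line_dist y + dist z' y" by (rule line_dist_triangle)
    then show "w \<in> cball y (3 * line_dist y)"
      using z' dist_triangle[of y w z'] unfolding line_dist_def by (auto simp: dist_commute)
  qed
  then have bounded: "bounded (proj ` ball y (line_dist y))"
    using bounded_cball bounded_subset by blast
  have "0 < line_dist y" using assms zero_le_dist[of y z] by linarith
  then have "y \<in> ball y (line_dist y)" "z \<in> ball y (line_dist y)"
    using assms by auto
  then have "dist (proj y) (proj z) \<le> diameter (proj ` ball y (line_dist y))"
    by (intro diameter_bounded_bound[OF bounded]) auto
  also have "\<dots> \<le> K" using contracting[OF disjoint] unfolding proj_def .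
  finally show ?thesis .
qed

text \<open>Cut the path into steps of length \<open>< r\<close>; each moves the projection by at most \<open>K\<close>.\<close>

lemma dist_proj_path_le:
  assumes "a \<le> b" and lip: "\<And>s t. s \<in> {a..b} \<Longrightarrow> t \<in> {a..b} \<Longrightarrow> dist (\<gamma> s) (\<gamma> t) \<le> \<bar>s - t\<bar>"
    and "r > 0" and far: "\<And>s. a \<le> s \<Longrightarrow> s < b \<Longrightarrow> r \<le> line_dist (\<gamma> s)"
  shows "dist (proj (\<gamma> a)) (proj (\<gamma> b)) \<le> K * ((b - a) / r + 1)"
proof (cases "a = b")
  case True
  then show ?thesis using K_pos \<open>r > 0\<close> by simp
next
  case False
  then have "a < b" using \<open>a \<le> b\<close> by simp
  define n where "n = nat \<lfloor>(b - a) / r\<rfloor> + 1"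
  define \<delta> where "\<delta> = (b - a) / n"
  have n_le: "real n \<le> (b - a) / r + 1" and n_gt: "(b - a) / r < real n"
    unfolding n_def using \<open>a < b\<close> \<open>r > 0\<close> by (simp_all add: of_nat_nat) linarith
  have "n > 0" unfolding n_def by simp
  have "\<delta> > 0" unfolding \<delta>_def using \<open>a < b\<close> \<open>n > 0\<close> by simp
  have "\<delta> < r" unfolding \<delta>_def using n_gt \<open>n > 0\<close> \<open>r > 0\<close> by (simp add: field_simps)
  have n_\<delta>: "real n * \<delta> = b - a" unfolding \<delta>_def using \<open>n > 0\<close> by simp
  have "dist (proj (\<gamma> a)) (proj (\<gamma> (a + real i * \<delta>))) \<le> real i * K" if "i \<le> n" for i
    using that
  proof (induction i)
    case 0
    then show ?case by simp
  next
    case (Suc i)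
    have "real i * \<delta> < real n * \<delta>" "real (Suc i) * \<delta> \<le> real n * \<delta>"
      using Suc.prems \<open>\<delta> > 0\<close> by (auto intro: mult_right_mono)
    then have bounds: "a \<le> a + real i * \<delta>" "a + real i * \<delta> < b" "a + real (Suc i) * \<delta> \<le> b"
      using n_\<delta> \<open>\<delta> > 0\<close> by auto
    then have "dist (\<gamma> (a + real i * \<delta>)) (\<gamma> (a + real (Suc i) * \<delta>)) \<le> \<delta>"
      using lip[of "a + real i * \<delta>" "a + real (Suc i) * \<delta>"] \<open>\<delta> > 0\<close> by (simp add: algebra_simps)
    also have "\<dots> < line_dist (\<gamma> (a + real i * \<delta>))" using far[OF bounds(1,2)] \<open>\<delta> < r\<close> by simp
    finally have "dist (proj (\<gamma> (a + real i * \<delta>))) (proj (\<gamma> (a + real (Suc i) * \<delta>))) \<le> K"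
      by (rule dist_proj_le_K)
    then show ?case
      using Suc dist_triangle[of "proj (\<gamma> a)" "proj (\<gamma> (a + real (Suc i) * \<delta>))" "proj (\<gamma> (a + real i * \<delta>))"]
      by (simp add: algebra_simps)
  qed
  from this[of n] have "dist (proj (\<gamma> a)) (proj (\<gamma> b)) \<le> real n * K" using n_\<delta> by simp
  also have "\<dots> \<le> K * ((b - a) / r + 1)" using n_le K_pos by (simp add: mult.commute)
  finally show ?thesis .
qed

lemma geodesic_line_dist_proj_le:
  assumes "geodesic_line L" "a \<le> b" "\<And>s. a \<le> s \<Longrightarrow> s < b \<Longrightarrow> 2 * K < line_dist (L s)"
  shows "dist (proj (L a)) (proj (L b)) \<le> (b - a) / 2 + K"
proof -
  have "dist (proj (L a)) (proj (L b)) \<le> K * ((b - a) / (2 * K) + 1)"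
    using assms K_pos geodesic_line_dist[OF assms(1)]
    by (intro dist_proj_path_le) (auto simp: less_imp_le)
  also have "\<dots> = (b - a) / 2 + K" using K_pos by (simp add: field_simps)
  finally show ?thesis .
qed

text \<open>A geodesic line that stays far from \<open>l\<close> on \<open>[a, b]\<close> has projection moving at most half as
  fast as itself, so it can only do so for a bounded time when it also stays at bounded distance.\<close>

lemma geodesic_line_returns:
  assumes L: "geodesic_line L" and bounded: "\<And>t. line_dist (L t) \<le> C" and far: "line_dist (L t0) > 2 * K"
  shows "\<exists>v\<ge>t0. line_dist (L v) \<le> 2 * K \<and> (\<forall>s. t0 \<le> s \<and> s < v \<longrightarrow> line_dist (L s) > 2 * K)"
proof -
  define T where "T = 4 * C + 4 * K + 1"
  have "T > 0" unfolding T_def using bounded[of 0] line_dist_nonneg[of "L 0"] K_pos by linarith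
  have "\<exists>s\<in>{t0..t0+T}. line_dist (L s) \<le> 2 * K"
  proof (rule ccontr)
    assume "\<not> ?thesis"
    then have "dist (proj (L t0)) (proj (L (t0 + T))) \<le> T / 2 + K"
      using geodesic_line_dist_proj_le[OF L, of t0 "t0 + T"] \<open>T > 0\<close> by (auto simp: not_le)
    moreover have "T = dist (L t0) (L (t0 + T))" using geodesic_line_dist[OF L] \<open>T > 0\<close> by simp
    moreover have "dist (L t0) (L (t0 + T))
        \<le> dist (L t0) (proj (L t0)) + dist (proj (L t0)) (proj (L (t0 + T))) + dist (proj (L (t0 + T))) (L (t0 + T))"
      by (rule dist_triangle4)
    ultimately show False
      using bounded[of t0] bounded[of "t0 + T"] dist_commute[of "proj (L (t0 + T))" "L (t0 + T)"] T_def K_pos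
      unfolding line_dist_def by linarith
  qed
  moreover define S where "S = {t0..t0+T} \<inter> {s. line_dist (L s) \<le> 2 * K}"
  moreover have "closed {s. line_dist (L s) \<le> 2 * K}"
    using continuous_on_compose[OF geodesic_line_continuous[OF L] line_dist_continuous]
    by (intro closed_Collect_le) (auto simp: o_def)
  ultimately have "compact S" "S \<noteq> {}" by (auto intro: compact_Int_closed)
  then obtain v where v: "v \<in> S" "\<And>y. y \<in> S \<Longrightarrow> v \<le> y"
    using compact_attains_inf by metis
  then show ?thesis unfolding S_def by (intro exI[of _ v]) force
qed

lemma line_dist_fellow_line_le:
  assumes L: "geodesic_line L" and close: "\<And>t. dist (L t) (l t) \<le> C"
  shows "line_dist (L t0) \<le> 14 * K"
proof (rule ccontr)
  assume contra: "\<not> ?thesis"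
  then have far: "line_dist (L t0) > 2 * K" using K_pos by simp
  have bounded: "line_dist (L t) \<le> C" for t using line_dist_le_line[of "L t" t] close[of t] by simp
  obtain v where v: "v \<ge> t0" "line_dist (L v) \<le> 2 * K" "\<And>s. t0 \<le> s \<Longrightarrow> s < v \<Longrightarrow> line_dist (L s) > 2 * K"
    using geodesic_line_returns[OF L bounded far] by blast
  obtain u' where u': "u' \<ge> - t0" "line_dist (L (- u')) \<le> 2 * K"
    "\<And>s. - t0 \<le> s \<Longrightarrow> s < u' \<Longrightarrow> line_dist (L (- s)) > 2 * K"
    using geodesic_line_returns[OF geodesic_line_reflect[OF L], of C "- t0"] bounded far by auto
  define u where "u = - u'"
  have u: "u \<le> t0" "line_dist (L u) \<le> 2 * K" using u' unfolding u_def by auto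
  have "dist (proj (L t0)) (proj (L v)) \<le> (v - t0) / 2 + K"
    using geodesic_line_dist_proj_le[OF L] v by auto
  moreover have "dist (proj (L t0)) (proj (L u)) \<le> (t0 - u) / 2 + K"
    using geodesic_line_dist_proj_le[OF geodesic_line_reflect[OF L], of "- t0" u'] u' unfolding u_def
    by (auto simp: add.commute)
  ultimately have "dist (proj (L u)) (proj (L v)) \<le> (v - u) / 2 + 2 * K"
    using dist_triangle[of "proj (L u)" "proj (L v)" "proj (L t0)"] dist_commute[of "proj (L u)" "proj (L t0)"]
    by argo
  moreover have "v - u = dist (L u) (L v)" using geodesic_line_dist[OF L] u v by simp
  moreover have "dist (L u) (L v) \<le> dist (L u) (proj (L u)) + dist (proj (L u)) (proj (L v)) + dist (proj (L v)) (L v)"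
    by (rule dist_triangle4)
  ultimately have "v - u \<le> 12 * K" using u v unfolding line_dist_def by (simp add: dist_commute)
  moreover have "line_dist (L t0) \<le> 2 * K + (v - t0)"
    using line_dist_triangle[of "L t0" "L v"] v geodesic_line_dist[OF L] by simp
  ultimately show False using u contra by simp
qed

lemma dist_proj_nearest_le:
  assumes geodesic: "geodesic_space TYPE('a)" and q: "q \<in> range l" and "dist y q = line_dist y" "line_dist y > 0"
  shows "dist (proj y) q \<le> K"
proof (rule field_le_epsilon)
  fix e :: real assume "e > 0"
  obtain \<gamma> where \<gamma>: "geodesic_seg \<gamma> y q" using geodesic_space_seg[OF geodesic] by blast
  define R where "R = line_dist y"
  define \<delta> where "\<delta> = min (e/2) (R/2)"
  have \<delta>: "\<delta> > 0" "\<delta> < R" "\<delta> \<le> e/2" unfolding \<delta>_def R_def using \<open>e > 0\<close> assms by auto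
  have "\<gamma> 0 = y" "\<gamma> R = q" using geodesic_seg_ends[OF \<gamma>] assms unfolding R_def by auto
  then have d1: "dist y (\<gamma> (R - \<delta>)) = R - \<delta>" and d2: "dist (\<gamma> (R - \<delta>)) q = \<delta>"
    using geodesic_seg_dist[OF \<gamma>, of 0 "R - \<delta>"] geodesic_seg_dist[OF \<gamma>, of "R - \<delta>" R] \<delta> assms
    unfolding R_def by auto
  have "dist (proj y) (proj (\<gamma> (R - \<delta>))) \<le> K"
    using d1 \<delta> unfolding R_def by (intro dist_proj_le_K) simp
  moreover have "dist (proj (\<gamma> (R - \<delta>))) q \<le> 2 * \<delta>"
    using line_dist_le[OF q, of "\<gamma> (R - \<delta>)"] d2 dist_triangle[of "proj (\<gamma> (R - \<delta>))" q "\<gamma> (R - \<delta>)"]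
    unfolding line_dist_def by (simp add: dist_commute)
  ultimately show "dist (proj y) q \<le> K + e"
    using dist_triangle[of "proj y" q "proj (\<gamma> (R - \<delta>))"] \<delta> by linarith
qed

text \<open>If an isometry \<open>h\<close> translates \<open>l\<close> by \<open>c\<close> (long compared with \<open>K\<close>), every point moved by at
  most \<open>c + 1\<close> lies close to \<open>l\<close>: the projections of \<open>x\<close> and \<open>h x\<close> are about \<open>c\<close> apart, so a
  geodesic from \<open>x\<close> to \<open>h x\<close> cannot stay far from \<open>l\<close> throughout.\<close>

lemma line_dist_le_of_displacement_le:
  assumes geodesic: "geodesic_space TYPE('a)" and iso: "\<And>x y. dist (h x) (h y) = dist x y"
    and shift: "\<And>t. h (l t) = l (t + c)" and "c > 4 * K + 1" and displ: "dist x (h x) \<le> c + 1"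
  shows "line_dist x \<le> (c + 1) / 2 + 2 * K"
proof (cases "line_dist x \<le> 2 * K")
  case True
  then show ?thesis using \<open>c > 4 * K + 1\<close> K_pos by argo
next
  case False
  obtain s where s: "proj x = l s" using proj_in_range[of x] by auto
  obtain s' where s': "proj (h x) = l s'" using proj_in_range[of "h x"] by auto
  have "line_dist (h x) \<le> line_dist x"
    using line_dist_le_line[of "h x" "s + c"] shift[of s] iso[of x "l s"] s unfolding line_dist_def by simp
  moreover have "line_dist x \<le> line_dist (h x)"
    using line_dist_le_line[of x "s' - c"] iso[of x "l (s' - c)"] shift[of "s' - c"] s'
    unfolding line_dist_def by simp
  ultimately have same: "line_dist (h x) = line_dist x" by simp
  have "dist (h x) (h (l s)) = line_dist (h x)" using iso s same unfolding line_dist_def by simp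
  then have "dist (proj (h x)) (h (l s)) \<le> K"
    using dist_proj_nearest_le[OF geodesic] shift[of s] False K_pos same by auto
  moreover have "dist (proj x) (h (l s)) = c"
    using s shift[of s] geodesic_line_dist[OF line, of s "s + c"] \<open>c > 4 * K + 1\<close> K_pos by simp
  ultimately have proj_far: "c - K \<le> dist (proj x) (proj (h x))"
    using dist_triangle[of "proj x" "h (l s)" "proj (h x)"] by (simp add: dist_commute)
  obtain \<gamma> where \<gamma>: "geodesic_seg \<gamma> x (h x)" using geodesic_space_seg[OF geodesic] by blast
  define D where "D = dist x (h x)"
  have ends: "\<gamma> 0 = x" "\<gamma> D = h x" using geodesic_seg_ends[OF \<gamma>] D_def by auto
  show ?thesis
  proof (cases "\<forall>s. 0 \<le> s \<and> s < D \<longrightarrow> 2 * K \<le> line_dist (\<gamma> s)")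
    case True
    have "dist (proj (\<gamma> 0)) (proj (\<gamma> D)) \<le> K * ((D - 0) / (2 * K) + 1)"
      by (rule dist_proj_path_le) (use True K_pos geodesic_seg_dist[OF \<gamma>] D_def in auto)
    also have "\<dots> = D / 2 + K" using K_pos by (simp add: field_simps)
    finally show ?thesis using proj_far ends displ \<open>c > 4 * K + 1\<close> unfolding D_def by (simp add: field_simps)
  next
    case False
    then obtain t where t: "0 \<le> t" "t < D" "line_dist (\<gamma> t) < 2 * K" by (auto simp: not_le)
    have "dist x (\<gamma> t) = t" "dist (\<gamma> t) (h x) = D - t"
      using geodesic_seg_dist[OF \<gamma>, of 0 t] geodesic_seg_dist[OF \<gamma>, of t D] ends t D_def by auto
    then have "line_dist x \<le> line_dist (\<gamma> t) + t" "line_dist (h x) \<le> line_dist (\<gamma> t) + (D - t)"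
      using line_dist_triangle[of x "\<gamma> t"] line_dist_triangle[of "h x" "\<gamma> t"] by (auto simp: dist_commute)
    then show ?thesis using same t displ unfolding D_def by (simp add: field_simps)
  qed
qed

end

lemma contracting_line_of_contracting:
  "geodesic_line l \<Longrightarrow> contracting l \<Longrightarrow> \<exists>K. contracting_line l K"
  unfolding contracting_def contracting_line_def by blast

lemma contracting_line_reparametrize:
  "contracting_line l K \<Longrightarrow> geodesic_line m \<Longrightarrow> range m = range l \<Longrightarrow> contracting_line m K"
  unfolding contracting_line_def by simp

section \<open>CAT(0) spaces\<close>

lemma euclidean_triangle_exists:
  fixes A B C :: real
  assumes "A \<ge> 0" "B \<ge> 0" "C \<ge> 0" "A \<le> B + C" "B \<le> A + C" "C \<le> A + B"
  shows "\<exists>x' y' z' :: complex. dist x' y' = A \<and> dist y' z' = B \<and> dist z' x' = C"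
proof (cases "A = 0")
  case True
  then show ?thesis using assms
    by (intro exI[of _ 0] exI[of _ "complex_of_real C"]) (simp add: dist_norm)
next
  case False
  then have "A > 0" using assms by simp
  define u where "u = (A^2 + C^2 - B^2) / (2 * A)"
  define v where "v = sqrt (C^2 - u^2)"
  have "(A - C)^2 \<le> B^2" "B^2 \<le> (A + C)^2"
    using assms abs_le_square_iff[of "A - C" B] by (auto intro: power_mono)
  then have "\<bar>u\<bar> \<le> C" unfolding u_def using \<open>A > 0\<close>
    by (simp add: abs_le_iff field_simps power2_eq_square)
  then have "u^2 \<le> C^2" by (metis abs_ge_zero power2_abs power_mono)
  then have v2: "v^2 = C^2 - u^2" unfolding v_def by simp
  have "dist (Complex u v) 0 = C"
    using v2 assms by (simp add: dist_norm complex_norm)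
  moreover have "complex_of_real A - Complex u v = Complex (A - u) (- v)"
    by (simp add: complex_eq_iff)
  then have "dist (complex_of_real A) (Complex u v) = sqrt ((A - u)^2 + v^2)"
    by (simp add: dist_norm complex_norm)
  moreover have "(A - u)^2 + v^2 = B^2"
    using v2 \<open>A > 0\<close> unfolding u_def by (simp add: power2_eq_square field_simps)
  ultimately show ?thesis using \<open>A > 0\<close> assms
    by (intro exI[of _ 0] exI[of _ "complex_of_real A"] exI[of _ "Complex u v"]) (simp add: dist_norm)
qed

text \<open>In a comparison triangle, the midpoints of two sides are at half the distance of the third.\<close>

lemma CAT0_midpoints:
  assumes cat: "CAT0 TYPE('a::metric_space)" and g1: "geodesic_seg c1 x y" and g2: "geodesic_seg c2 y (z::'a)"
  shows "dist (c1 (dist x y / 2)) (c2 (dist y z / 2)) \<le> dist z x / 2"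
proof -
  obtain c3 where g3: "geodesic_seg c3 z x"
    using cat unfolding CAT0_def geodesic_space_def by blast
  obtain x' y' z' :: complex where ct: "dist x' y' = dist x y" "dist y' z' = dist y z" "dist z' x' = dist z x"
    using euclidean_triangle_exists[of "dist x y" "dist y z" "dist z x"]
      dist_triangle[of x y z] dist_triangle[of y z x] dist_triangle[of z x y]
    by (auto simp: dist_commute)
  have comparison: "\<forall>s\<in>{0..dist x y}. \<forall>t\<in>{0..dist y z}. dist (c1 s) (c2 t)
      \<le> dist (x' + of_real (s / dist x y) * (y' - x')) (y' + of_real (t / dist y z) * (z' - y'))"
    using cat g1 g2 g3 ct unfolding CAT0_def Let_def by auto
  have "dist x y / 2 \<in> {0..dist x y}" "dist y z / 2 \<in> {0..dist y z}" by auto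
  from comparison[rule_format, OF this] have "dist (c1 (dist x y / 2)) (c2 (dist y z / 2))
     \<le> dist (x' + of_real ((dist x y / 2) / dist x y) * (y' - x')) (y' + of_real ((dist y z / 2) / dist y z) * (z' - y'))" .
  also have "\<dots> = dist (x' + (y' - x') / 2) (y' + (z' - y') / 2)"
    using ct by (cases "dist x y = 0"; cases "dist y z = 0") auto
  also have "\<dots> = dist x' z' / 2"
  proof -
    have "(x' + (y' - x') / 2) - (y' + (z' - y') / 2) = (x' - z') / 2"
      by (simp add: field_simps)
    then show ?thesis unfolding dist_norm by (simp only:) (simp add: norm_divide)
  qed
  finally show ?thesis using ct by (simp add: dist_commute)
qed

lemma geodesic_seg_isometry:
  "geodesic_seg c x y \<Longrightarrow> isometry g \<Longrightarrow> geodesic_seg (g \<circ> c) (g x) (g y)"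
  unfolding geodesic_seg_def by (auto simp: isometry_dist)

text \<open>The midpoint of a geodesic from \<open>y\<close> to \<open>g y\<close> is moved by at most \<open>d(y, g\<^sup>2 y)/2\<close>.\<close>

lemma CAT0_translation_length_le_half:
  assumes cat: "CAT0 TYPE('a::metric_space)" and iso: "isometry (g::'a \<Rightarrow> 'a)"
  shows "translation_length g \<le> dist y (g (g y)) / 2"
proof -
  obtain c where c: "geodesic_seg c y (g y)"
    using cat unfolding CAT0_def geodesic_space_def by blast
  have "dist (c (dist y (g y) / 2)) ((g \<circ> c) (dist (g y) (g (g y)) / 2)) \<le> dist (g (g y)) y / 2"
    by (rule CAT0_midpoints[OF cat c geodesic_seg_isometry[OF c iso]])
  then show ?thesis
    using translation_length_le[of g "c (dist y (g y) / 2)"] isometry_dist[OF iso]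
    by (simp add: dist_commute)
qed

section \<open>Translation length of a root\<close>

lemma le_of_le_plus_div_nat:
  fixes c a b :: real
  assumes "\<And>M::nat. M > 0 \<Longrightarrow> c \<le> a + b / real M" "b \<ge> 0"
  shows "c \<le> a"
proof (rule ccontr)
  assume "\<not> c \<le> a"
  then obtain M :: nat where M: "b / (c - a) < real M" "c - a > 0"
    using reals_Archimedean2 by auto
  then have "M > 0" using assms(2) by (metis divide_nonneg_pos not_gr0 not_le of_nat_0)
  have "b < real M * (c - a)" using M by (simp add: field_simps)
  then have "b / real M < c - a" using \<open>M > 0\<close> by (simp add: field_simps)
  then show False using assms(1)[OF \<open>M > 0\<close>] by simp
qed

lemma le_of_le_plus_div_power2:
  fixes c a b :: real
  assumes "\<And>k::nat. c \<le> a + b / 2 ^ k" "b \<ge> 0"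
  shows "c \<le> a"
proof (rule le_of_le_plus_div_nat[OF _ assms(2)])
  fix M :: nat assume "M > 0"
  have "real M \<le> 2 ^ M" by (metis less_exp less_imp_le of_nat_le_iff of_nat_numeral of_nat_power)
  then have "b / 2 ^ M \<le> b / real M" using \<open>M > 0\<close> assms(2) by (intro divide_left_mono) auto
  then show "c \<le> a + b / real M" using assms(1)[of M] by simp
qed

context cyclic_isom_action
begin

lemma translation_le_dist_pw:
  fixes l :: "real \<Rightarrow> 'a"
  assumes l: "geodesic_line l" and shift: "\<And>t. pw p (l t) = l (t + c)" and "c \<ge> 0"
  shows "c \<le> dist y (pw p y)"
proof (rule le_of_le_plus_div_nat)
  fix M :: nat assume "M > 0"
  have "real M * c = dist (l 0) (pw (int M * p) (l 0))"
    using pw_mult_shift[where l=l, OF shift, of "int M" 0] geodesic_line_dist[OF l] \<open>c \<ge> 0\<close> by simp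
  also have "\<dots> \<le> dist (l 0) y + dist y (pw (int M * p) y) + dist (pw (int M * p) y) (pw (int M * p) (l 0))"
    by (rule dist_triangle4)
  also have "\<dots> \<le> 2 * dist y (l 0) + real M * dist y (pw p y)"
    using pw_mult_dist_le[of y M p] pw_dist[of "int M * p" y "l 0"] by (simp add: dist_commute)
  finally show "c \<le> dist y (pw p y) + 2 * dist y (l 0) / real M"
    using \<open>M > 0\<close> by (simp add: field_simps)
qed simp

text \<open>In a CAT(0) space the translation length of \<open>g\<^sup>2\<close> is twice that of \<open>g\<close>.\<close>

lemma CAT0_translation_length_pw_power2:
  assumes cat: "CAT0 TYPE('a)"
  shows "translation_length (pw 1) \<le> translation_length (pw (2 ^ k)) / 2 ^ k"
proof (induction k)
  case (Suc k)
  have "2 * translation_length (pw (2 ^ k)) \<le> translation_length (pw (2 ^ Suc k))"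
  proof (rule translation_length_greatest)
    fix y
    have "pw (2 ^ Suc k) y = pw (2 ^ k) (pw (2 ^ k) y)" using pw_add[of "2 ^ k" "2 ^ k" y] by simp
    then show "2 * translation_length (pw (2 ^ k)) \<le> dist y (pw (2 ^ Suc k) y)"
      using CAT0_translation_length_le_half[OF cat pw_isometry, of "2 ^ k" y] by simp
  qed
  then have "translation_length (pw (2 ^ k)) / 2 ^ k \<le> translation_length (pw (2 ^ Suc k)) / 2 ^ Suc k"
    by (simp add: field_simps)
  then show ?case using Suc by linarith
qed simp

lemma dist_pw_line_le:
  fixes l :: "real \<Rightarrow> 'a"
  assumes l: "geodesic_line l" and shift: "\<And>t. pw (int p) (l t) = l (t + c)" and "c \<ge> 0" "p > 0"
  shows "dist (l 0) (pw (int N) (l 0)) \<le> real N * (c / p) + real p * dist (l 0) (pw 1 (l 0))"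
proof -
  define q where "q = N div p"
  define r where "r = N mod p"
  have N: "int N = int q * int p + int r" unfolding q_def r_def by (simp flip: of_nat_mult of_nat_add)
  have "dist (l 0) (pw (int N) (l 0))
      \<le> dist (l 0) (pw (int q * int p) (l 0)) + dist (pw (int q * int p) (l 0)) (pw (int N) (l 0))"
    by (rule dist_triangle)
  also have "dist (l 0) (pw (int q * int p) (l 0)) = real q * c"
    using pw_mult_shift[where l=l, OF shift, of "int q" 0] geodesic_line_dist[OF l] \<open>c \<ge> 0\<close> by simp
  also have "dist (pw (int q * int p) (l 0)) (pw (int N) (l 0)) \<le> real r * dist (l 0) (pw 1 (l 0))"
    using pw_mult_dist_le[of "l 0" r 1] unfolding dist_pw_pw N by simp
  also have "real r * dist (l 0) (pw 1 (l 0)) \<le> real p * dist (l 0) (pw 1 (l 0))"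
    using \<open>p > 0\<close> unfolding r_def by (intro mult_right_mono) auto
  also have "real q * c \<le> real N * (c / p)"
  proof -
    have "real q * real p \<le> real N"
      unfolding q_def by (metis div_times_less_eq_dividend of_nat_le_iff of_nat_mult)
    then have "real q \<le> real N / real p" using \<open>p > 0\<close> by (metis pos_le_divide_eq of_nat_0_less_iff)
    from mult_right_mono[OF this \<open>c \<ge> 0\<close>] show ?thesis by simp
  qed
  finally show ?thesis by simp
qed

text \<open>Hence \<open>\<tau>(\<beta>) \<le> \<tau>(\<beta>\<^bsup>2\<^sup>k\<^esup>)/2\<^sup>k \<le> d(l 0, \<beta>\<^bsup>2\<^sup>k\<^esup> (l 0))/2\<^sup>k\<close>, which tends to \<open>c/p\<close>.\<close>

lemma CAT0_translation_length_root_le: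
  fixes l :: "real \<Rightarrow> 'a"
  assumes cat: "CAT0 TYPE('a)" and l: "geodesic_line l" and shift: "\<And>t. pw (int p) (l t) = l (t + c)"
    and "c \<ge> 0" "p > 0"
  shows "translation_length (pw 1) \<le> c / p"
proof -
  define D where "D = real p * dist (l 0) (pw 1 (l 0))"
  have "translation_length (pw 1) \<le> c / p + D / 2 ^ k" for k :: nat
  proof -
    have "translation_length (pw (2 ^ k)) \<le> 2 ^ k * (c / p) + D"
      using translation_length_le[of "pw (2 ^ k)" "l 0"] dist_pw_line_le[OF l shift \<open>c \<ge> 0\<close> \<open>p > 0\<close>, of "2 ^ k"]
      unfolding D_def by (simp only: of_nat_power) simp
    then have "translation_length (pw (2 ^ k)) / 2 ^ k \<le> (2 ^ k * (c / p) + D) / 2 ^ k"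
      by (rule divide_right_mono) simp
    also have "\<dots> = c / p + D / 2 ^ k"
      by (simp add: add_divide_distrib)
    finally show ?thesis using CAT0_translation_length_pw_power2[OF cat, of k] by linarith
  qed
  then show ?thesis by (rule le_of_le_plus_div_power2) (simp add: D_def)
qed

lemma CAT0_translation_length_root:
  fixes l :: "real \<Rightarrow> 'a"
  assumes cat: "CAT0 TYPE('a)" and l: "geodesic_line l" and shift: "\<And>t. pw (int p) (l t) = l (t + c)"
    and "c \<ge> 0" "p > 0"
  shows "translation_length (pw 1) = c / p" and "\<And>y. c / p \<le> dist y (pw 1 y)"
proof -
  show lower: "c / p \<le> dist y (pw 1 y)" for y
  proof -
    have "c \<le> real p * dist y (pw 1 y)"
      using translation_le_dist_pw[OF l shift \<open>c \<ge> 0\<close>, of y] pw_mult_dist_le[of y p 1] by simp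
    then show ?thesis using \<open>p > 0\<close> by (simp add: pos_divide_le_eq mult.commute)
  qed
  show "translation_length (pw 1) = c / p"
    using translation_length_greatest[OF lower] CAT0_translation_length_root_le[OF assms] by simp
qed

text \<open>The concatenation of the translates \<open>\<beta>\<^sup>k c\<^sub>0\<close>, \<open>k \<in> \<int>\<close>, of a path \<open>c\<^sub>0\<close> defined on
  \<open>[0, w]\<close>.\<close>

definition orbit_path :: "(real \<Rightarrow> 'a) \<Rightarrow> real \<Rightarrow> real \<Rightarrow> 'a" where
  "orbit_path c0 w t = pw \<lfloor>t / w\<rfloor> (c0 (t - of_int \<lfloor>t / w\<rfloor> * w))"

lemma orbit_path_shift: "w > 0 \<Longrightarrow> pw 1 (orbit_path c0 w t) = orbit_path c0 w (t + w)"
  using pw_add[of 1 "\<lfloor>t / w\<rfloor>"] unfolding orbit_path_def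
  by (simp add: add_divide_distrib algebra_simps)

lemma dist_orbit_path:
  assumes "w > 0" and c0: "geodesic_seg c0 x (pw 1 x)" and "dist x (pw 1 x) = w"
  shows "dist (orbit_path c0 w t) (pw \<lfloor>t / w\<rfloor> x) = t - of_int \<lfloor>t / w\<rfloor> * w"
    and "dist (orbit_path c0 w t) (pw (\<lfloor>t / w\<rfloor> + 1) x) = of_int (\<lfloor>t / w\<rfloor> + 1) * w - t"
    and "\<lfloor>s / w\<rfloor> = \<lfloor>t / w\<rfloor> \<Longrightarrow> dist (orbit_path c0 w s) (orbit_path c0 w t) = \<bar>s - t\<bar>"
proof -
  define r where "r t = t - of_int \<lfloor>t / w\<rfloor> * w" for t
  have r: "r t \<in> {0..w}" for t
    using floor_divide_lower[OF \<open>w > 0\<close>, of t] floor_divide_upper[OF \<open>w > 0\<close>, of t]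
    unfolding r_def by (simp add: distrib_right)
  have L: "orbit_path c0 w t = pw \<lfloor>t / w\<rfloor> (c0 (r t))" for t unfolding orbit_path_def r_def ..
  have "c0 0 = x" "c0 w = pw 1 x" using geodesic_seg_ends[OF c0] assms by auto
  moreover have c0_dist: "dist (c0 a) (c0 b) = \<bar>a - b\<bar>" if "a \<in> {0..w}" "b \<in> {0..w}" for a b
    using geodesic_seg_dist[OF c0] assms that by auto
  moreover have "pw (\<lfloor>t / w\<rfloor> + 1) x = pw \<lfloor>t / w\<rfloor> (pw 1 x)" by (rule pw_add)
  ultimately show "dist (orbit_path c0 w t) (pw \<lfloor>t / w\<rfloor> x) = t - of_int \<lfloor>t / w\<rfloor> * w"
    and "dist (orbit_path c0 w t) (pw (\<lfloor>t / w\<rfloor> + 1) x) = of_int (\<lfloor>t / w\<rfloor> + 1) * w - t"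
    using pw_dist r[of t] c0_dist[of "r t" 0] c0_dist[of "r t" w] \<open>w > 0\<close> unfolding L
    by (simp_all add: r_def algebra_simps)
  show "dist (orbit_path c0 w s) (orbit_path c0 w t) = \<bar>s - t\<bar>" if "\<lfloor>s / w\<rfloor> = \<lfloor>t / w\<rfloor>"
    using that pw_dist c0_dist[OF r[of s] r[of t]] unfolding L by (simp add: r_def)
qed

lemma geodesic_line_orbit_path:
  assumes "w > 0" "geodesic_seg c0 x (pw 1 x)" "dist x (pw 1 x) = w"
    and orbit: "\<And>N::nat. dist x (pw (int N) x) = real N * w"
  shows "geodesic_line (orbit_path c0 w)"
proof -
  let ?L = "orbit_path c0 w" and ?k = "\<lambda>t. \<lfloor>t / w\<rfloor>"
  note start = dist_orbit_path(1)[OF assms(1-3)] and finish = dist_orbit_path(2)[OF assms(1-3)]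
  have orbit_int: "a \<le> b \<Longrightarrow> dist (pw a x) (pw b x) = of_int (b - a) * w" for a b
    using dist_pw_pw[of a x b] orbit[of "nat (b - a)"] by simp
  have "dist (?L s) (?L t) = t - s" if "s \<le> t" for s t
  proof (cases "?k s = ?k t")
    case True
    then show ?thesis using dist_orbit_path(3)[OF assms(1-3)] that by simp
  next
    case False
    have "?k s \<le> ?k t" using that \<open>w > 0\<close> by (intro floor_mono divide_right_mono) auto
    then have "?k s + 1 \<le> ?k t" using False by simp
    have "dist (?L s) (?L t) \<le> dist (?L s) (pw (?k s + 1) x) + dist (pw (?k s + 1) x) (pw (?k t) x) + dist (pw (?k t) x) (?L t)"
      by (rule dist_triangle4)
    also have "\<dots> = t - s"
      using finish[of s] orbit_int[OF \<open>?k s + 1 \<le> ?k t\<close>] start[of t] by (simp add: dist_commute algebra_simps)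
    finally have "dist (?L s) (?L t) \<le> t - s" .
    moreover have "dist (pw (?k s) x) (pw (?k t + 1) x) \<le> dist (pw (?k s) x) (?L s) + dist (?L s) (?L t) + dist (?L t) (pw (?k t + 1) x)"
      by (rule dist_triangle4)
    then have "t - s \<le> dist (?L s) (?L t)"
      using orbit_int[of "?k s" "?k t + 1"] \<open>?k s \<le> ?k t\<close> start[of s] finish[of t]
      by (simp add: dist_commute algebra_simps)
    ultimately show ?thesis by simp
  qed
  then show ?thesis
    unfolding geodesic_line_def by (metis abs_of_nonneg abs_minus_commute dist_commute diff_ge_0_iff_ge linear)
qed

text \<open>A point moved little by \<open>\<beta>\<close> is moved little by \<open>\<beta>\<^sup>p\<close>, hence lies near the contracting line
  \<open>l\<close>; translating it along \<open>l\<close> by a power of \<open>\<beta>\<^sup>p\<close> brings it into a fixed ball.\<close>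

lemma small_displacement_point_near_base:
  fixes l :: "real \<Rightarrow> 'a"
  assumes geodesic: "geodesic_space TYPE('a)" and "contracting_line l K"
    and shift: "\<And>t. pw (int p) (l t) = l (t + c)" and c: "c > 4 * K + 1" and "p > 0"
    and displ: "dist x (pw 1 x) \<le> (c + 1) / p"
  shows "\<exists>x'. dist x' (l 0) \<le> (c + 1) / 2 + 2 * K + c \<and> dist x' (pw 1 x') = dist x (pw 1 x)"
proof -
  interpret contracting_line l K by fact
  have "dist x (pw (int p) x) \<le> c + 1"
    using pw_mult_dist_le[of x p 1] displ \<open>p > 0\<close> by (simp add: field_simps)
  then have near: "line_dist x \<le> (c + 1) / 2 + 2 * K"
    by (intro line_dist_le_of_displacement_le[OF geodesic pw_dist shift c])
  obtain s where s: "proj x = l s" using proj_in_range[of x] by auto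
  define x' where "x' = pw (- \<lfloor>s / c\<rfloor> * int p) x"
  have "c > 0" using c K_pos by simp
  have "dist x' (l (s - of_int \<lfloor>s / c\<rfloor> * c)) = line_dist x"
    using pw_mult_shift[where l=l, OF shift, of "- \<lfloor>s / c\<rfloor>" s, symmetric] pw_dist s
    unfolding x'_def line_dist_def by simp
  moreover have "dist (l (s - of_int \<lfloor>s / c\<rfloor> * c)) (l 0) \<le> c"
    using geodesic_line_dist[OF line] floor_divide_lower[OF \<open>c > 0\<close>, of s]
      floor_divide_upper[OF \<open>c > 0\<close>, of s] by (simp add: algebra_simps)
  ultimately have "dist x' (l 0) \<le> (c + 1) / 2 + 2 * K + c"
    using near dist_triangle[of x' "l 0" "l (s - of_int \<lfloor>s / c\<rfloor> * c)"] by simp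
  moreover have "dist x' (pw 1 x') = dist x (pw 1 x)"
    unfolding x'_def using pw_commute[of 1 _ x] pw_dist by simp
  ultimately show ?thesis by blast
qed

lemma translation_length_root_attained:
  fixes l :: "real \<Rightarrow> 'a"
  assumes cat: "CAT0 TYPE('a)" and proper: "proper_space TYPE('a)" and "contracting_line l K"
    and shift: "\<And>t. pw (int p) (l t) = l (t + c)" and "c > 0" "p > 0"
  shows "\<exists>x. dist x (pw 1 x) = c / p"
proof -
  interpret contracting_line l K by fact
  have geodesic: "geodesic_space TYPE('a)" using cat unfolding CAT0_def by simp
  have \<tau>: "translation_length (pw 1) = c / p" "\<And>y. c / p \<le> dist y (pw 1 y)"
    using CAT0_translation_length_root[OF cat line shift] \<open>c > 0\<close> \<open>p > 0\<close> by auto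
  \<comment> \<open>pass to a power \<open>\<beta>\<^bsup>j p\<^esup>\<close> translating \<open>l\<close> by more than \<open>4 K + 1\<close>\<close>
  obtain j :: nat where j: "(4 * K + 1) / c < real j" using reals_Archimedean2 by blast
  then have jc: "real j * c > 4 * K + 1" using \<open>c > 0\<close> by (simp add: field_simps)
  then have "j > 0" using K_pos by (cases j) auto
  have shift': "pw (int (j * p)) (l t) = l (t + real j * c)" for t
    using pw_mult_shift[where l=l, OF shift, of "int j" t] by simp
  define R where "R = (real j * c + 1) / 2 + 2 * K + real j * c"
  have almost: "\<exists>x\<in>cball (l 0) R. dist x (pw 1 x) \<le> c / p + e" if "e > 0" for e
  proof -
    define e' where "e' = min e (1 / real (j * p))"
    have "e' > 0" unfolding e'_def using \<open>e > 0\<close> \<open>j > 0\<close> \<open>p > 0\<close> by simp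
    then obtain x where x: "dist x (pw 1 x) < c / p + e'"
      using cInf_lessD[of "range (\<lambda>x. dist x (pw 1 x))" "c / p + e'"] \<tau>(1)
      unfolding translation_length_def by auto
    have "(real j * c + 1) / real (j * p) = c / p + 1 / real (j * p)"
      using \<open>j > 0\<close> \<open>p > 0\<close> by (simp add: field_simps)
    then have "c / p + e' \<le> (real j * c + 1) / real (j * p)"
      unfolding e'_def by linarith
    then obtain x' where "dist x' (l 0) \<le> R" "dist x' (pw 1 x') = dist x (pw 1 x)"
      using small_displacement_point_near_base[OF geodesic \<open>contracting_line l K\<close> shift' jc, of x] x
        \<open>j > 0\<close> \<open>p > 0\<close> unfolding R_def by fastforce
    then show ?thesis using x unfolding e'_def by (intro bexI[of _ x']) (auto simp: dist_commute)
  qed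
  have "compact (cball (l 0) R)" using proper unfolding proper_space_def by simp
  moreover have "R \<ge> 0" unfolding R_def using jc K_pos by argo
  then have "cball (l 0) R \<noteq> {}" by simp
  moreover have "continuous_on (cball (l 0) R) (\<lambda>x. dist x (pw 1 x))"
    using pw_continuous by (intro continuous_intros) auto
  ultimately obtain x where "x \<in> cball (l 0) R" "\<And>y. y \<in> cball (l 0) R \<Longrightarrow> dist x (pw 1 x) \<le> dist y (pw 1 y)"
    using continuous_attains_inf by metis
  then have "dist x (pw 1 x) \<le> c / p + e" if "e > 0" for e
    using almost[OF that] by force
  then have "dist x (pw 1 x) \<le> c / p" by (rule field_le_epsilon)
  then show ?thesis using \<tau>(2)[of x] by (intro exI[of _ x] antisym)
qed

lemma dist_orbit_of_minimal_point:
  fixes l :: "real \<Rightarrow> 'a"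
  assumes l: "geodesic_line l" and shift: "\<And>t. pw (int p) (l t) = l (t + c)" and "c \<ge> 0" "p > 0"
    and minimal: "dist x (pw 1 x) = c / p"
  shows "dist x (pw (int N) x) = real N * (c / p)"
proof (rule antisym)
  show "dist x (pw (int N) x) \<le> real N * (c / p)"
    using pw_mult_dist_le[of x N 1] minimal by simp
  have "real N * c \<le> dist x (pw (int (N * p)) x)"
    using translation_le_dist_pw[OF l, of "int (N * p)" "real N * c"] \<open>c \<ge> 0\<close>
      pw_mult_shift[where l=l, OF shift, of "int N"] by simp
  also have "\<dots> \<le> dist x (pw (int N) x) + dist (pw (int N) x) (pw (int (N * p)) x)"
    by (rule dist_triangle)
  also have "dist (pw (int N) x) (pw (int (N * p)) x) \<le> real (N * p - N) * (c / p)"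
    using dist_pw_pw[of "int N" x "int (N * p)"] pw_mult_dist_le[of x "N * p - N" 1] minimal \<open>p > 0\<close>
    by (simp add: of_nat_diff)
  finally show "real N * (c / p) \<le> dist x (pw (int N) x)"
    using \<open>p > 0\<close> by (simp add: of_nat_diff field_simps)
qed

theorem root_of_contracting_translation_has_axis:
  fixes l :: "real \<Rightarrow> 'a"
  assumes cat: "CAT0 TYPE('a)" and proper: "proper_space TYPE('a)" and contracting: "contracting_line l K"
    and shift: "\<And>t. pw (int p) (l t) = l (t + c)" and "c > 0" "p > 0"
  shows "\<exists>L. geodesic_line L \<and> (\<forall>t. pw 1 (L t) = L (t + c / p)) \<and> translation_length (pw 1) = c / p"
proof -
  have l: "geodesic_line l" using contracting unfolding contracting_line_def by simp
  obtain x where x: "dist x (pw 1 x) = c / p"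
    using translation_length_root_attained[OF cat proper contracting shift] \<open>c > 0\<close> \<open>p > 0\<close> by blast
  obtain c0 where "geodesic_seg c0 x (pw 1 x)"
    using cat unfolding CAT0_def geodesic_space_def by blast
  then have "geodesic_line (orbit_path c0 (c / p))"
    using geodesic_line_orbit_path dist_orbit_of_minimal_point[OF l shift _ _ x] x \<open>c > 0\<close> \<open>p > 0\<close>
    by simp
  then show ?thesis
    using orbit_path_shift[of "c / p" c0] CAT0_translation_length_root(1)[OF cat l shift] \<open>c > 0\<close> \<open>p > 0\<close>
    by auto
qed

end

section \<open>Products\<close>

lemma minkowski_equality_case:
  fixes A1 A2 B1 B2 C1 C2 a b :: real
  assumes nonneg: "A1 \<ge> 0" "A2 \<ge> 0" "B1 \<ge> 0" "B2 \<ge> 0" "C1 \<ge> 0" "C2 \<ge> 0" and "a > 0" "b > 0"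
    and A: "A1^2 + A2^2 = a^2" and B: "B1^2 + B2^2 = b^2" and C: "C1^2 + C2^2 = (a + b)^2"
    and le1: "C1 \<le> A1 + B1" and le2: "C2 \<le> A2 + B2"
  shows "A1 * b = B1 * a \<and> A2 * b = B2 * a \<and> C1 = A1 + B1 \<and> C2 = A2 + B2"
proof -
  have sq1: "C1^2 \<le> (A1 + B1)^2" and sq2: "C2^2 \<le> (A2 + B2)^2"
    using le1 le2 nonneg by (auto intro: power_mono)
  then have "(a + b)^2 \<le> (A1 + B1)^2 + (A2 + B2)^2" using C by simp
  then have inner: "a * b \<le> A1 * B1 + A2 * B2" using A B by (simp add: power2_eq_square algebra_simps)
  \<comment> \<open>Cauchy--Schwarz is an equality, so the two vectors are parallel\<close>
  have "(A1 * b - B1 * a)^2 + (A2 * b - B2 * a)^2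
      = b^2 * (A1^2 + A2^2) + a^2 * (B1^2 + B2^2) - 2 * a * b * (A1 * B1 + A2 * B2)"
    by (simp add: power2_eq_square algebra_simps)
  also have "\<dots> = 2 * a^2 * b^2 - 2 * a * b * (A1 * B1 + A2 * B2)"
    unfolding A B by (simp add: power2_eq_square)
  also have "\<dots> \<le> 2 * a^2 * b^2 - 2 * a * b * (a * b)"
    using inner \<open>a > 0\<close> \<open>b > 0\<close> by (simp add: mult_left_mono)
  also have "\<dots> = 0" by (simp add: power2_eq_square)
  finally have "(A1 * b - B1 * a)^2 + (A2 * b - B2 * a)^2 = 0"
    using sum_power2_ge_zero[of "A1 * b - B1 * a" "A2 * b - B2 * a"] by linarith
  then have par1: "A1 * b = B1 * a" and par2: "A2 * b = B2 * a"
    unfolding sum_power2_eq_zero_iff by simp_all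
  have "(A1 * B1 + A2 * B2) * a = A1 * (B1 * a) + A2 * (B2 * a)" by (simp add: algebra_simps)
  also have "\<dots> = (A1^2 + A2^2) * b" using par1 par2 by (simp add: power2_eq_square algebra_simps)
  finally have "(A1 * B1 + A2 * B2) * a = a^2 * b" using A by simp
  then have "A1 * B1 + A2 * B2 = a * b" using A \<open>a > 0\<close> by (simp add: power2_eq_square)
  then have "(A1 + B1)^2 + (A2 + B2)^2 = (a + b)^2" using A B by (simp add: power2_eq_square algebra_simps)
  then have "C1^2 = (A1 + B1)^2" "C2^2 = (A2 + B2)^2" using sq1 sq2 C by linarith+
  then show ?thesis using par1 par2 nonneg by (simp add: power2_eq_iff_nonneg)
qed

lemma mediant_eq:
  fixes x y \<alpha> \<beta> :: real
  assumes "x * \<beta> = y * \<alpha>" "\<alpha> > 0" "\<beta> > 0"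
  shows "x / \<alpha> = (x + y) / (\<alpha> + \<beta>)" "y / \<beta> = (x + y) / (\<alpha> + \<beta>)"
  using assms by (simp_all add: field_simps)

lemma geodesic_line_prod_components:
  fixes L :: "real \<Rightarrow> 'a::metric_space \<times> 'b::metric_space"
  assumes "geodesic_line L"
  shows "(dist (fst (L s)) (fst (L t)))^2 + (dist (snd (L s)) (snd (L t)))^2 = (s - t)^2"
  using geodesic_line_dist[OF assms, of s t] unfolding dist_prod_def
  by (metis power2_abs real_sqrt_pow2 sum_power2_ge_zero)

text \<open>Equality in the triangle inequality for the product metric forces equality in both factors,
  with proportional contributions; so both components of a geodesic line have constant speed.\<close>

lemma geodesic_line_prod_speed_three:
  fixes L :: "real \<Rightarrow> 'a::metric_space \<times> 'b::metric_space"
  assumes L: "geodesic_line L" and "a < b" "b < c"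
  shows "dist (fst (L a)) (fst (L b)) / (b - a) = dist (fst (L a)) (fst (L c)) / (c - a)"
    and "dist (fst (L b)) (fst (L c)) / (c - b) = dist (fst (L a)) (fst (L c)) / (c - a)"
    and "dist (snd (L a)) (snd (L b)) / (b - a) = dist (snd (L a)) (snd (L c)) / (c - a)"
    and "dist (snd (L b)) (snd (L c)) / (c - b) = dist (snd (L a)) (snd (L c)) / (c - a)"
proof -
  define A1 where "A1 = dist (fst (L a)) (fst (L b))"
  define A2 where "A2 = dist (snd (L a)) (snd (L b))"
  define B1 where "B1 = dist (fst (L b)) (fst (L c))"
  define B2 where "B2 = dist (snd (L b)) (snd (L c))"
  define C1 where "C1 = dist (fst (L a)) (fst (L c))"
  define C2 where "C2 = dist (snd (L a)) (snd (L c))"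
  have "A1^2 + A2^2 = (b - a)^2" "B1^2 + B2^2 = (c - b)^2" "C1^2 + C2^2 = ((b - a) + (c - b))^2"
    using geodesic_line_prod_components[OF L, of a b] geodesic_line_prod_components[OF L, of b c]
      geodesic_line_prod_components[OF L, of a c]
    unfolding A1_def A2_def B1_def B2_def C1_def C2_def by (simp_all add: power2_commute)
  moreover have "C1 \<le> A1 + B1" "C2 \<le> A2 + B2"
    unfolding A1_def A2_def B1_def B2_def C1_def C2_def by (rule dist_triangle)+
  ultimately have "A1 * (c - b) = B1 * (b - a) \<and> A2 * (c - b) = B2 * (b - a) \<and> C1 = A1 + B1 \<and> C2 = A2 + B2"
    using assms unfolding A1_def A2_def B1_def B2_def C1_def C2_def
    by (intro minkowski_equality_case) auto
  then have "A1 / (b - a) = C1 / (c - a) \<and> B1 / (c - b) = C1 / (c - a) \<and>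
      A2 / (b - a) = C2 / (c - a) \<and> B2 / (c - b) = C2 / (c - a)"
    using mediant_eq[of A1 "c - b" B1 "b - a"] mediant_eq[of A2 "c - b" B2 "b - a"] assms by simp
  then show "dist (fst (L a)) (fst (L b)) / (b - a) = dist (fst (L a)) (fst (L c)) / (c - a)"
    and "dist (fst (L b)) (fst (L c)) / (c - b) = dist (fst (L a)) (fst (L c)) / (c - a)"
    and "dist (snd (L a)) (snd (L b)) / (b - a) = dist (snd (L a)) (snd (L c)) / (c - a)"
    and "dist (snd (L b)) (snd (L c)) / (c - b) = dist (snd (L a)) (snd (L c)) / (c - a)"
    unfolding A1_def A2_def B1_def B2_def C1_def C2_def by auto
qed

lemma geodesic_line_prod_speed:
  fixes L :: "real \<Rightarrow> 'a::metric_space \<times> 'b::metric_space"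
  assumes L: "geodesic_line L"
  shows "dist (fst (L s)) (fst (L t)) = dist (fst (L 0)) (fst (L 1)) * \<bar>s - t\<bar>"
    and "dist (snd (L s)) (snd (L t)) = dist (snd (L 0)) (snd (L 1)) * \<bar>s - t\<bar>"
proof -
  \<comment> \<open>compare the speeds on \<open>[s, t]\<close> and on \<open>[0, 1]\<close> with the speed on an interval containing both\<close>
  have inner: "dist (fst (L s)) (fst (L t)) / (t - s) = dist (fst (L S)) (fst (L T)) / (T - S) \<and>
      dist (snd (L s)) (snd (L t)) / (t - s) = dist (snd (L S)) (snd (L T)) / (T - S)"
    if "S < s" "s < t" "t < T" for s t S T
    using geodesic_line_prod_speed_three[OF L, of S s T] geodesic_line_prod_speed_three[OF L, of s t T] that
    by auto
  have forward: "dist (fst (L s)) (fst (L t)) = dist (fst (L 0)) (fst (L 1)) * (t - s) \<and>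
      dist (snd (L s)) (snd (L t)) = dist (snd (L 0)) (snd (L 1)) * (t - s)" if "s < t" for s t
  proof -
    define S T where "S = min s 0 - 1" and "T = max t 1 + 1"
    have "S < s" "S < 0" "t < T" "1 < T" unfolding S_def T_def by auto
    then have "dist (fst (L 0)) (fst (L 1)) = dist (fst (L S)) (fst (L T)) / (T - S) \<and>
        dist (snd (L 0)) (snd (L 1)) = dist (snd (L S)) (snd (L T)) / (T - S)"
      using inner[of S 0 1 T] by (simp only: diff_zero div_by_1 zero_less_one)
    with inner[OF \<open>S < s\<close> that \<open>t < T\<close>]
    have "dist (fst (L s)) (fst (L t)) / (t - s) = dist (fst (L 0)) (fst (L 1)) \<and>
        dist (snd (L s)) (snd (L t)) / (t - s) = dist (snd (L 0)) (snd (L 1))"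
      by argo
    then show ?thesis using that by (simp add: divide_eq_eq)
  qed
  show "dist (fst (L s)) (fst (L t)) = dist (fst (L 0)) (fst (L 1)) * \<bar>s - t\<bar>"
    and "dist (snd (L s)) (snd (L t)) = dist (snd (L 0)) (snd (L 1)) * \<bar>s - t\<bar>"
  proof -
    have "dist (fst (L s)) (fst (L t)) = dist (fst (L 0)) (fst (L 1)) * \<bar>s - t\<bar> \<and>
        dist (snd (L s)) (snd (L t)) = dist (snd (L 0)) (snd (L 1)) * \<bar>s - t\<bar>"
    proof (cases s t rule: linorder_cases)
      case less
      then show ?thesis using forward[of s t] by simp
    next
      case greater
      then show ?thesis using forward[of t s] by (simp add: dist_commute)
    qed simp
    then show "dist (fst (L s)) (fst (L t)) = dist (fst (L 0)) (fst (L 1)) * \<bar>s - t\<bar>"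
      and "dist (snd (L s)) (snd (L t)) = dist (snd (L 0)) (snd (L 1)) * \<bar>s - t\<bar>" by auto
  qed
qed

lemma map_prod_dist:
  assumes "\<And>x y. dist (g1 x) (g1 y) = dist x y" "\<And>x y. dist (g2 x) (g2 y) = dist x y"
  shows "dist (map_prod g1 g2 z) (map_prod g1 g2 w) = dist z w"
  using assms by (simp add: map_prod_def dist_prod_def split_beta)

lemma translation_length_map_prod_le:
  "sqrt ((translation_length g1)^2 + (translation_length g2)^2) \<le> dist z (map_prod g1 g2 z)"
proof -
  have "(translation_length g1)^2 \<le> (dist (fst z) (g1 (fst z)))^2"
    "(translation_length g2)^2 \<le> (dist (snd z) (g2 (snd z)))^2"
    using translation_length_le translation_length_nonneg by (auto intro: power_mono)
  then show ?thesis unfolding dist_prod_def by (simp add: map_prod_def split_beta)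
qed

lemma map_prod_axis:
  fixes g1 :: "'a::metric_space \<Rightarrow> 'a" and g2 :: "'b::metric_space \<Rightarrow> 'b"
  assumes L1: "geodesic_line L1" and shift1: "\<And>t. g1 (L1 t) = L1 (t + translation_length g1)"
    and L2: "geodesic_line L2" and shift2: "\<And>t. g2 (L2 t) = L2 (t + translation_length g2)"
    and "translation_length g2 > 0"
  shows "translation_length (map_prod g1 g2) = sqrt ((translation_length g1)^2 + (translation_length g2)^2)"
    and "\<exists>L. is_axis (map_prod g1 g2) L"
proof -
  define a where "a = translation_length g1"
  define b where "b = translation_length g2"
  define w where "w = sqrt (a^2 + b^2)"
  have "w > 0" unfolding w_def b_def using \<open>translation_length g2 > 0\<close> by (simp add: add_nonneg_pos)
  have w2: "w^2 = a^2 + b^2" unfolding w_def by simp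
  define L where "L t = (L1 (a / w * t), L2 (b / w * t))" for t
  have "dist (L s) (L t) = \<bar>s - t\<bar>" for s t
  proof -
    have "dist (L s) (L t) = sqrt ((a / w * (s - t))^2 + (b / w * (s - t))^2)"
      unfolding L_def dist_prod_def
      by (simp add: geodesic_line_dist[OF L1] geodesic_line_dist[OF L2] right_diff_distrib)
    also have "(a / w * (s - t))^2 + (b / w * (s - t))^2 = (s - t)^2 * ((a^2 + b^2) / w^2)"
      by (simp only: power_mult_distrib power_divide) (simp add: algebra_simps add_divide_distrib)
    also have "(a^2 + b^2) / w^2 = 1" unfolding w2[symmetric] using \<open>w > 0\<close> by simp
    finally show ?thesis by simp
  qed
  then have L: "geodesic_line L" unfolding geodesic_line_def by blast
  have shift: "map_prod g1 g2 (L t) = L (t + w)" for t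
    using shift1 shift2 \<open>w > 0\<close> unfolding L_def a_def b_def by (simp add: distrib_left)
  have \<tau>: "translation_length (map_prod g1 g2) = w"
  proof (rule translation_length_eqI)
    show "w \<le> dist x (map_prod g1 g2 x)" for x
      using translation_length_map_prod_le unfolding w_def a_def b_def .
    show "dist (L 0) (map_prod g1 g2 (L 0)) = w"
      using shift[of 0] geodesic_line_dist[OF L, of 0 w] \<open>w > 0\<close> by simp
  qed
  then show "translation_length (map_prod g1 g2) = sqrt ((translation_length g1)^2 + (translation_length g2)^2)"
    unfolding w_def a_def b_def .
  have "map_prod g1 g2 ` range L = range L"
  proof
    have "map_prod g1 g2 (L t) \<in> range L" for t using shift[of t] by simp
    then show "map_prod g1 g2 ` range L \<subseteq> range L" by (simp add: image_subset_iff)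
    have "L t = map_prod g1 g2 (L (t - w))" for t using shift[of "t - w"] by simp
    then show "range L \<subseteq> map_prod g1 g2 ` range L" by blast
  qed
  then have "is_axis (map_prod g1 g2) L"
    unfolding is_axis_def using L shift \<tau> geodesic_line_dist[OF L] \<open>w > 0\<close> by simp
  then show "\<exists>L. is_axis (map_prod g1 g2) L" by blast
qed

text \<open>Along an axis the translation \<open>(\<tau>\<^sub>1, \<tau>\<^sub>2)\<close> is realised by the components, which have
  constant speed, so the slope of the axis is \<open>\<tau>\<^sub>1/\<tau>\<^sub>2\<close>.\<close>

lemma slope_line_axis_map_prod:
  fixes g1 :: "'a::metric_space \<Rightarrow> 'a" and g2 :: "'b::metric_space \<Rightarrow> 'b"
  assumes axis: "is_axis (map_prod g1 g2) L"
    and iso1: "\<And>x y. dist (g1 x) (g1 y) = dist x y" and iso2: "\<And>x y. dist (g2 x) (g2 y) = dist x y"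
    and \<tau>: "translation_length (map_prod g1 g2) = sqrt ((translation_length g1)^2 + (translation_length g2)^2)"
    and "translation_length g2 > 0"
  shows "slope_line L = ereal (translation_length g1 / translation_length g2)"
proof -
  define a where "a = translation_length g1"
  define b where "b = translation_length g2"
  define w where "w = sqrt (a^2 + b^2)"
  have "a \<ge> 0" "b > 0" unfolding a_def b_def using translation_length_nonneg assms(5) by auto
  then have "w > 0" unfolding w_def by (simp add: add_nonneg_pos)
  have w2: "w^2 = a^2 + b^2" unfolding w_def by simp
  have L: "geodesic_line L" using axis unfolding is_axis_def by simp
  have "map_prod g1 g2 (L t) \<in> range L" "dist (L t) (map_prod g1 g2 (L t)) = w" for t
    using axis \<tau> unfolding is_axis_def w_def a_def b_def by auto
  then obtain \<sigma> where "\<bar>\<sigma>\<bar> = w" and "\<And>t. map_prod g1 g2 (L t) = L (t + \<sigma>)"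
    using isometry_line_translation[OF L map_prod_dist[OF iso1 iso2]] \<open>w > 0\<close> by metis
  then have shift: "L \<sigma> = map_prod g1 g2 (L 0)" by (metis add_0)
  define d1 where "d1 = dist (fst (L 0)) (fst (L \<sigma>))"
  define d2 where "d2 = dist (snd (L 0)) (snd (L \<sigma>))"
  have "a \<le> d1" "b \<le> d2"
    using translation_length_le shift unfolding d1_def d2_def a_def b_def by (auto simp: map_prod_def split_beta)
  then have "a^2 \<le> d1^2" "b^2 \<le> d2^2" using \<open>a \<ge> 0\<close> \<open>b > 0\<close> by (auto intro: power_mono)
  moreover have "d1^2 + d2^2 = \<bar>\<sigma>\<bar>^2"
    using geodesic_line_prod_components[OF L, of 0 \<sigma>] unfolding d1_def d2_def by simp
  moreover have "\<bar>\<sigma>\<bar>^2 = w^2" using \<open>\<bar>\<sigma>\<bar> = w\<close> by simp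
  ultimately have "d1^2 = a^2" "d2^2 = b^2" using w2 by linarith+
  then have "d1 = a" "d2 = b"
    using \<open>a \<ge> 0\<close> \<open>b > 0\<close> unfolding d1_def d2_def by (simp_all add: power2_eq_iff_nonneg)
  then have "a = dist (fst (L 0)) (fst (L 1)) * w" "b = dist (snd (L 0)) (snd (L 1)) * w"
    using geodesic_line_prod_speed[OF L, of 0 \<sigma>] \<open>\<bar>\<sigma>\<bar> = w\<close> unfolding d1_def d2_def by simp_all
  then have speeds: "dist (fst (L 0)) (fst (L 1)) = a / w" "dist (snd (L 0)) (snd (L 1)) = b / w"
    using \<open>w > 0\<close> by simp_all
  then have "snd (L 1) \<noteq> snd (L 0)"
    using \<open>b > 0\<close> \<open>w > 0\<close> by (metis dist_self divide_pos_pos order_less_irrefl)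
  then have "\<not> (\<forall>t\<ge>0. snd (L t) = snd (L 0))" by (metis zero_le_one)
  then show ?thesis
    using speeds \<open>w > 0\<close> unfolding slope_line_def slope_ray_def a_def b_def by simp
qed

lemma slope_isom_map_prod:
  fixes g1 :: "'a::metric_space \<Rightarrow> 'a" and g2 :: "'b::metric_space \<Rightarrow> 'b"
  assumes "isometry g1" "isometry g2"
    and L: "geodesic_line L" "\<And>t. g1 (L t) = L (t + translation_length g1)"
    and M: "geodesic_line M" "\<And>t. g2 (M t) = M (t + translation_length g2)"
    and "translation_length g2 > 0"
  shows "slope_isom (map_prod g1 g2) = ereal (translation_length g1 / translation_length g2)"
proof -
  have "is_axis (map_prod g1 g2) (SOME L. is_axis (map_prod g1 g2) L)"
    using map_prod_axis(2)[OF L M assms(7)] by (rule someI_ex)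
  then show ?thesis
    unfolding slope_isom_def using assms(1,2) map_prod_axis(1)[OF L M assms(7)] assms(7)
    by (intro slope_line_axis_map_prod) (auto simp: isometry_dist)
qed

section \<open>Elements fixing the endpoints of a contracting axis\<close>

lemma geodesic_line_in_bd_point: "geodesic_line l \<Longrightarrow> l \<in> bd_point l"
  unfolding bd_point_def asymptotic_def geodesic_ray_def geodesic_line_def by auto

lemma fixes_endpoints_bounded_displacement:
  assumes l: "geodesic_line l" and "fixes_bd g (endpoint_plus l)" "fixes_bd g (endpoint_minus l)"
  shows "\<exists>C. \<forall>x\<in>range l. dist (g x) x \<le> C"
proof -
  have "g \<circ> l \<in> bd_point l" "g \<circ> (\<lambda>t. l (- t)) \<in> bd_point (\<lambda>t. l (- t))"
    using assms geodesic_line_in_bd_point[OF l] geodesic_line_in_bd_point[OF geodesic_line_reflect[OF l]]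
    unfolding fixes_bd_def endpoint_plus_def endpoint_minus_def bd_act_def by blast+
  then obtain C1 C2 where C1: "\<And>t. t \<ge> 0 \<Longrightarrow> dist (l t) (g (l t)) \<le> C1"
    and C2: "\<And>t. t \<ge> 0 \<Longrightarrow> dist (l (- t)) (g (l (- t))) \<le> C2"
    unfolding bd_point_def asymptotic_def by auto
  have "dist (g (l t)) (l t) \<le> max C1 C2" for t
  proof (cases "t \<ge> 0")
    case True
    then show ?thesis using C1[of t] by (simp add: dist_commute)
  next
    case False
    then show ?thesis using C2[of "- t"] by (simp add: dist_commute)
  qed
  then show ?thesis by blast
qed

lemma int_pow_diff_eq_of_mult_eq:
  fixes G (structure)
  assumes "group G" "a \<in> carrier G" "b \<in> carrier G"
    and eq: "a [^] (z::int) \<otimes> b [^] (int n) = a [^] (z'::int) \<otimes> b [^] (int n')" and "n' < n"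
  shows "b [^] (int (n - n')) = a [^] (z' - z)"
proof -
  interpret group G by fact
  have "(a [^] (- z) \<otimes> a [^] z) \<otimes> b [^] (int n) = (a [^] (- z) \<otimes> a [^] z') \<otimes> b [^] (int n')"
    using eq assms(2,3) by (simp add: m_assoc)
  then have b_n: "b [^] (int n) = a [^] (z' - z) \<otimes> b [^] (int n')"
    using assms(2,3) by (simp add: int_pow_mult[symmetric])
  have "b [^] (int (n - n')) = b [^] (int n) \<otimes> b [^] (- int n')"
    using \<open>n' < n\<close> assms(3) by (simp add: of_nat_diff int_pow_mult[symmetric])
  also have "\<dots> = a [^] (z' - z) \<otimes> (b [^] (int n') \<otimes> b [^] (- int n'))"
    using b_n assms(2,3) by (simp add: m_assoc)
  also have "b [^] (int n') \<otimes> b [^] (- int n') = \<one>"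
    using assms(3) int_pow_mult[of b "int n'" "- int n'"] by simp
  finally show ?thesis using assms(2) by simp
qed

lemma exists_less_eq_of_finite_range:
  fixes f :: "nat \<Rightarrow> 'b"
  assumes "finite F" "\<And>n. f n \<in> F"
  shows "\<exists>n n'. n' < n \<and> f n = f n'"
proof -
  have "finite (range f)" using assms by (meson finite_subset image_subsetI)
  then have "\<not> inj f" using finite_imageD[of f UNIV] by auto
  then obtain x y where "x \<noteq> y" "f x = f y" unfolding inj_def by blast
  then show ?thesis by (metis linorder_neqE_nat)
qed

text \<open>The powers \<open>\<beta>\<^sup>n\<close> move the contracting line \<open>l\<close> within bounded distance of itself, so
  \<open>\<beta>\<^sup>n (l 0)\<close> stays \<open>14 K\<close>-close to \<open>l\<close>, and a power of \<open>\<alpha>\<close> translates it back near \<open>l 0\<close>.\<close>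

lemma pow_return_near_base:
  fixes \<rho> :: "'g \<Rightarrow> 'a::metric_space \<Rightarrow> 'a" and G (structure)
  assumes "group G" and action: "isom_action G \<rho>" and \<alpha>: "\<alpha> \<in> carrier G" and \<beta>: "\<beta> \<in> carrier G"
    and "contracting_line l K" and shift: "\<And>t. \<rho> \<alpha> (l t) = l (t + \<tau>)" and "\<tau> > 0"
    and bounded: "\<And>x. x \<in> range l \<Longrightarrow> dist (\<rho> \<beta> x) x \<le> C"
  shows "\<exists>z::int. dist (l 0) (\<rho> (\<alpha> [^] z \<otimes> \<beta> [^] (int n)) (l 0)) \<le> 14 * K + \<tau>"
proof -
  interpret group G by fact
  interpret A: cyclic_isom_action G \<rho> \<alpha> using \<open>group G\<close> action \<alpha> by (rule cyclic_isom_action.intro)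
  interpret B: cyclic_isom_action G \<rho> \<beta> using \<open>group G\<close> action \<beta> by (rule cyclic_isom_action.intro)
  interpret contracting_line l K by fact
  have orbit_close: "dist (B.pw (int n) (l t)) (l t) \<le> real n * C" for t
  proof -
    have "dist (B.pw (int n) (l t)) (l t) \<le> real n * dist (\<rho> \<beta> (l t)) (l t)"
      using B.pw_mult_dist_le[of "l t" n 1] B.pw_1 by (simp add: dist_commute)
    also have "\<dots> \<le> real n * C" using bounded[of "l t"] by (simp add: mult_left_mono)
    finally show ?thesis .
  qed
  have near: "line_dist (B.pw (int n) (l 0)) \<le> 14 * K"
    using line_dist_fellow_line_le[OF geodesic_line_isometry[OF line B.pw_dist[of "int n"]] orbit_close] .
  obtain s where s: "proj (B.pw (int n) (l 0)) = l s" using proj_in_range by blast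
  define z where "z = - \<lfloor>s / \<tau>\<rfloor>"
  have "dist (l (s + of_int z * \<tau>)) (A.pw z (B.pw (int n) (l 0))) \<le> 14 * K"
    using A.pw_mult_shift[where l=l and p=1, of \<tau> z s, symmetric] shift A.pw_1 A.pw_dist near s
    unfolding line_dist_def by (simp add: dist_commute)
  moreover have "dist (l 0) (l (s + of_int z * \<tau>)) \<le> \<tau>"
    using geodesic_line_dist[OF line] floor_divide_lower[OF \<open>\<tau> > 0\<close>, of s]
      floor_divide_upper[OF \<open>\<tau> > 0\<close>, of s] unfolding z_def by (simp add: algebra_simps)
  ultimately have "dist (l 0) (A.pw z (B.pw (int n) (l 0))) \<le> 14 * K + \<tau>"
    using dist_triangle[of "l 0" "A.pw z (B.pw (int n) (l 0))" "l (s + of_int z * \<tau>)"] by linarith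
  moreover have "\<rho> (\<alpha> [^] z \<otimes> \<beta> [^] (int n)) (l 0) = A.pw z (B.pw (int n) (l 0))"
    unfolding A.pw_def B.pw_def using isom_action_mult[OF action] \<alpha> \<beta> by simp
  ultimately show ?thesis by (intro exI[of _ z]) simp
qed

text \<open>By proper discontinuity two of the elements \<open>\<alpha>\<^bsup>z\<^sub>n\<^esup> \<beta>\<^sup>n\<close> returning \<open>l 0\<close> to a fixed ball
  coincide.\<close>

theorem commensurable_of_bounded_displacement:
  fixes \<rho> :: "'g \<Rightarrow> 'a::metric_space \<Rightarrow> 'a" and G (structure)
  assumes proper: "proper_space TYPE('a)" and "group G"
    and action: "isom_action G \<rho>" and discontinuous: "properly_discontinuous G \<rho>"
    and \<alpha>: "\<alpha> \<in> carrier G" and \<beta>: "\<beta> \<in> carrier G"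
    and contracting: "contracting_line l K" and shift: "\<And>t. \<rho> \<alpha> (l t) = l (t + \<tau>)" and "\<tau> > 0"
    and bounded: "\<And>x. x \<in> range l \<Longrightarrow> dist (\<rho> \<beta> x) x \<le> C"
    and infinite_order: "\<forall>n::nat. n > 0 \<longrightarrow> \<beta> [^] n \<noteq> \<one>"
  shows "\<exists>p z. p > 0 \<and> z \<noteq> 0 \<and> \<beta> [^] (int p) = \<alpha> [^] (z::int)"
proof -
  interpret group G by fact
  have "\<forall>n. \<exists>z::int. dist (l 0) (\<rho> (\<alpha> [^] z \<otimes> \<beta> [^] (int n)) (l 0)) \<le> 14 * K + \<tau>"
    using pow_return_near_base[OF \<open>group G\<close> action \<alpha> \<beta> contracting shift \<open>\<tau> > 0\<close> bounded] by blast
  from choice[OF this] obtain z :: "nat \<Rightarrow> int"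
    where z: "\<forall>n. dist (l 0) (\<rho> (\<alpha> [^] z n \<otimes> \<beta> [^] (int n)) (l 0)) \<le> 14 * K + \<tau>"
    by blast
  define \<gamma> where "\<gamma> n = \<alpha> [^] (z n) \<otimes> \<beta> [^] (int n)" for n
  define B where "B = cball (l 0) (14 * K + \<tau>)"
  have "l 0 \<in> B" "\<rho> (\<gamma> n) (l 0) \<in> B" for n
    using z contracting \<open>\<tau> > 0\<close> unfolding B_def \<gamma>_def contracting_line_def by auto
  moreover have "\<gamma> n \<in> carrier G" for n unfolding \<gamma>_def using \<alpha> \<beta> by simp
  ultimately have "\<gamma> n \<in> {g \<in> carrier G. \<rho> g ` B \<inter> B \<noteq> {}}" for n by blast
  moreover have "finite {g \<in> carrier G. \<rho> g ` B \<inter> B \<noteq> {}}"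
    using discontinuous proper unfolding properly_discontinuous_def proper_space_def B_def by blast
  ultimately obtain n n' where "n' < n" "\<gamma> n = \<gamma> n'"
    using exists_less_eq_of_finite_range by metis
  then have eq: "\<beta> [^] (int (n - n')) = \<alpha> [^] (z n' - z n)"
    using int_pow_diff_eq_of_mult_eq[OF \<open>group G\<close> \<alpha> \<beta>] unfolding \<gamma>_def by blast
  moreover have "z n' - z n \<noteq> 0"
  proof
    assume "z n' - z n = 0"
    then have "\<beta> [^] (n - n') = \<one>" using eq by (metis int_pow_0 int_pow_int)
    then show False using infinite_order \<open>n' < n\<close> by simp
  qed
  ultimately show ?thesis using \<open>n' < n\<close> by (intro exI[of _ "n - n'"] exI[of _ "z n' - z n"]) auto
qed

lemma contracting_axis_oriented:
  assumes "isometry g" "is_axis g l" "contracting l" "translation_length g > 0"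
  shows "\<exists>m K. contracting_line m K \<and> range m = range l \<and> (\<forall>t. g (m t) = m (t + translation_length g))"
  using is_axis_oriented[OF assms(1,2,4)] contracting_line_of_contracting[OF _ assms(3)] assms(2)
    contracting_line_reparametrize unfolding is_axis_def by metis

theorem commensurable_of_fixes_endpoints:
  fixes \<rho> :: "'g \<Rightarrow> 'a::metric_space \<Rightarrow> 'a" and G (structure)
  assumes proper: "proper_space TYPE('a)" and group: "group G"
    and action: "isom_action G \<rho>" and discontinuous: "properly_discontinuous G \<rho>"
    and \<alpha>: "\<alpha> \<in> carrier G" and \<beta>: "\<beta> \<in> carrier G"
    and axis: "is_axis (\<rho> \<alpha>) l" "contracting l" "translation_length (\<rho> \<alpha>) > 0"
    and endpoints: "fixes_bd (\<rho> \<beta>) (endpoint_plus l)" "fixes_bd (\<rho> \<beta>) (endpoint_minus l)"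
    and infinite_order: "\<forall>n::nat. n > 0 \<longrightarrow> \<beta> [^] n \<noteq> \<one>"
  shows "\<exists>p z. p > 0 \<and> z \<noteq> 0 \<and> \<beta> [^] (int p) = \<alpha> [^] (z::int)"
proof -
  obtain m K where m: "contracting_line m K" "range m = range l"
    "\<And>t. \<rho> \<alpha> (m t) = m (t + translation_length (\<rho> \<alpha>))"
    using contracting_axis_oriented[OF isom_action_isometry[OF action \<alpha>] axis] by blast
  have "geodesic_line l" using axis(1) unfolding is_axis_def by simp
  from fixes_endpoints_bounded_displacement[OF this endpoints]
  obtain C where "\<forall>x\<in>range l. dist (\<rho> \<beta> x) x \<le> C" ..
  then have "\<And>x. x \<in> range m \<Longrightarrow> dist (\<rho> \<beta> x) x \<le> C" unfolding m(2) by blast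
  then show ?thesis
    using commensurable_of_bounded_displacement[OF proper group action discontinuous \<alpha> \<beta> m(1,3) axis(3)
        _ infinite_order] by blast
qed

text \<open>The power \<open>\<beta>\<^sup>p = \<alpha>\<^sup>z\<close> translates the contracting axis of \<open>\<alpha>\<close> by \<open>|z| \<tau>(\<alpha>)\<close>, so
  \<open>root_of_contracting_translation_has_axis\<close> applies to \<open>\<beta>\<close>.\<close>

theorem translation_axis_of_pow_eq:
  fixes \<rho> :: "'g \<Rightarrow> 'a::metric_space \<Rightarrow> 'a"
  assumes cat: "CAT0 TYPE('a)" and proper: "proper_space TYPE('a)" and "group G"
    and action: "isom_action G \<rho>" and \<alpha>: "\<alpha> \<in> carrier G" and \<beta>: "\<beta> \<in> carrier G"
    and axis: "is_axis (\<rho> \<alpha>) l" "contracting l" "translation_length (\<rho> \<alpha>) > 0"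
    and "p > 0" "z \<noteq> 0" and eq: "\<beta> [^]\<^bsub>G\<^esub> (int p) = \<alpha> [^]\<^bsub>G\<^esub> z"
  shows "\<exists>L. geodesic_line L \<and> (\<forall>t. \<rho> \<beta> (L t) = L (t + translation_length (\<rho> \<beta>)))
          \<and> translation_length (\<rho> \<beta>) = \<bar>of_int z\<bar> * translation_length (\<rho> \<alpha>) / p"
proof -
  interpret A: cyclic_isom_action G \<rho> \<alpha> using \<open>group G\<close> action \<alpha> by (rule cyclic_isom_action.intro)
  interpret B: cyclic_isom_action G \<rho> \<beta> using \<open>group G\<close> action \<beta> by (rule cyclic_isom_action.intro)
  obtain l' K where contracting: "contracting_line l' K"
    and shift: "\<And>t. \<rho> \<alpha> (l' t) = l' (t + translation_length (\<rho> \<alpha>))"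
    using contracting_axis_oriented[OF isom_action_isometry[OF action \<alpha>] axis] by blast
  have l': "geodesic_line l'" using contracting unfolding contracting_line_def by simp
  have "B.pw (int p) (l' t) = l' (t + of_int z * translation_length (\<rho> \<alpha>))" for t
    using A.pw_mult_shift[where l=l' and p=1, of "translation_length (\<rho> \<alpha>)" z t] shift A.pw_1 eq
    unfolding A.pw_def B.pw_def by simp
  then obtain m where m: "geodesic_line m" "range m = range l'"
    "\<And>t. B.pw (int p) (m t) = m (t + \<bar>of_int z * translation_length (\<rho> \<alpha>)\<bar>)"
    using geodesic_line_orient[OF l'] by blast
  have "\<bar>of_int z * translation_length (\<rho> \<alpha>)\<bar> > 0" using \<open>z \<noteq> 0\<close> axis(3) by simp
  from B.root_of_contracting_translation_has_axis[OF cat proper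
      contracting_line_reparametrize[OF contracting m(1,2)] m(3) this \<open>p > 0\<close>]
  show ?thesis using B.pw_1 axis(3) by (auto simp: abs_mult)
qed

section \<open>The slope of a commensurable element\<close>

lemma slope_isom_diag_action:
  assumes "isometry (\<rho> g)" "isometry (\<sigma> g)"
    and "geodesic_line L" "\<And>t. \<rho> g (L t) = L (t + translation_length (\<rho> g))"
    and "geodesic_line M" "\<And>t. \<sigma> g (M t) = M (t + translation_length (\<sigma> g))"
    and "translation_length (\<sigma> g) > 0"
  shows "slope_isom (diag_action \<rho> \<sigma> g) = ereal (translation_length (\<rho> g) / translation_length (\<sigma> g))"
proof -
  have "diag_action \<rho> \<sigma> g = map_prod (\<rho> g) (\<sigma> g)"
    unfolding diag_action_def map_prod_def by simp
  then show ?thesis using slope_isom_map_prod[OF assms] by simp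
qed

theorem lemma3p4:
  fixes G :: "('g, 'm) monoid_scheme"
    and \<rho>1 :: "'g \<Rightarrow> 'a::metric_space \<Rightarrow> 'a"
    and \<rho>2 :: "'g \<Rightarrow> 'b::metric_space \<Rightarrow> 'b"
    and \<alpha> \<beta> :: 'g
  assumes "proper_space TYPE('a)" and "CAT0 TYPE('a)"
    and "proper_space TYPE('b)" and "CAT0 TYPE('b)"
    and "group G" and "infinite (carrier G)"
    and "convex_cocompact G \<rho>1" and "convex_cocompact G \<rho>2"
    and "convex_cocompact G (diag_action \<rho>1 \<rho>2)"
    and "\<alpha> \<in> carrier G" and "rank_one (\<rho>1 \<alpha>)" and "rank_one (\<rho>2 \<alpha>)"
    and "\<beta> \<in> carrier G" and "\<forall>n::nat. n > 0 \<longrightarrow> \<beta> [^]\<^bsub>G\<^esub> n \<noteq> \<one>\<^bsub>G\<^esub>"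
    and "\<exists>l. is_axis (\<rho>1 \<alpha>) l \<and> contracting l \<and>
           fixes_bd (\<rho>1 \<beta>) (endpoint_plus l) \<and> fixes_bd (\<rho>1 \<beta>) (endpoint_minus l)"
    and "\<exists>l. is_axis (\<rho>2 \<alpha>) l \<and> contracting l \<and>
           fixes_bd (\<rho>2 \<beta>) (endpoint_plus l) \<and> fixes_bd (\<rho>2 \<beta>) (endpoint_minus l)"
  shows "slope_isom (diag_action \<rho>1 \<rho>2 \<beta>) = slope_isom (diag_action \<rho>1 \<rho>2 \<alpha>)"
proof -
  have act1: "isom_action G \<rho>1" and act2: "isom_action G \<rho>2" and pd1: "properly_discontinuous G \<rho>1"
    using assms(7,8) unfolding convex_cocompact_def by auto
  have iso: "isometry (\<rho>1 g)" "isometry (\<rho>2 g)" if "g \<in> carrier G" for g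
    using isom_action_isometry[OF act1 that] isom_action_isometry[OF act2 that] .
  have \<tau>1: "translation_length (\<rho>1 \<alpha>) > 0" and \<tau>2: "translation_length (\<rho>2 \<alpha>) > 0"
    using assms(11,12) unfolding rank_one_def hyperbolic_def by auto
  obtain l1 l2 where l1: "is_axis (\<rho>1 \<alpha>) l1" "contracting l1" "fixes_bd (\<rho>1 \<beta>) (endpoint_plus l1)"
      "fixes_bd (\<rho>1 \<beta>) (endpoint_minus l1)" and l2: "is_axis (\<rho>2 \<alpha>) l2" "contracting l2"
    using assms(15,16) by blast
  obtain p and z :: int where pz: "p > 0" "z \<noteq> 0" "\<beta> [^]\<^bsub>G\<^esub> (int p) = \<alpha> [^]\<^bsub>G\<^esub> z"
    using commensurable_of_fixes_endpoints[OF assms(1,5) act1 pd1 assms(10,13) l1(1,2) \<tau>1 l1(3,4) assms(14)]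
    by blast
  obtain L1 L2 where L1: "geodesic_line L1" "\<And>t. \<rho>1 \<beta> (L1 t) = L1 (t + translation_length (\<rho>1 \<beta>))"
      "translation_length (\<rho>1 \<beta>) = \<bar>of_int z\<bar> * translation_length (\<rho>1 \<alpha>) / p"
    and L2: "geodesic_line L2" "\<And>t. \<rho>2 \<beta> (L2 t) = L2 (t + translation_length (\<rho>2 \<beta>))"
      "translation_length (\<rho>2 \<beta>) = \<bar>of_int z\<bar> * translation_length (\<rho>2 \<alpha>) / p"
    using translation_axis_of_pow_eq[OF assms(2,1,5) act1 assms(10,13) l1(1,2) \<tau>1 pz]
      translation_axis_of_pow_eq[OF assms(4,3,5) act2 assms(10,13) l2 \<tau>2 pz] by metis
  obtain M1 M2 where M1: "geodesic_line M1" "\<And>t. \<rho>1 \<alpha> (M1 t) = M1 (t + translation_length (\<rho>1 \<alpha>))"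
    and M2: "geodesic_line M2" "\<And>t. \<rho>2 \<alpha> (M2 t) = M2 (t + translation_length (\<rho>2 \<alpha>))"
    using is_axis_oriented[OF iso(1)[OF assms(10)] l1(1) \<tau>1] is_axis_oriented[OF iso(2)[OF assms(10)] l2(1) \<tau>2]
    by metis
  have "translation_length (\<rho>2 \<beta>) > 0" using L2(3) \<tau>2 pz by simp
  then show ?thesis
    using slope_isom_diag_action[where \<rho> = \<rho>1 and \<sigma> = \<rho>2, OF iso[OF assms(13)] L1(1,2) L2(1,2)]
      slope_isom_diag_action[where \<rho> = \<rho>1 and \<sigma> = \<rho>2, OF iso[OF assms(10)] M1 M2 \<tau>2] L1(3) L2(3) pz by simp
qed

end
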